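(* Fix $n\in\mathbb{N}$. For each $N \ge n$ let $(\nu_t^{(1:N)})_{t\ge1}$ be random vectors of non-negative integers with $\sum_i\nu_t^{(i)} = N$, such that for all sufficiently large $N$ and all $u\ge0$, $\tau_N(u)<\infty$ almost surely. Suppose there is a deterministic sequence $b_N\to0$ such that for all sufficiently large $N$, almost surely and uniformly in $t\ge1$, $$\frac{1}{(N)_3}\sum_{i=1}^N \mathbb{E}\big[(\nu_t^{(i)})_3 \,\big|\, \mathcal{F}_{t-1}\big] \leq b_N \frac{1}{(N)_2}\sum_{i=1}^N \mathbb{E}\big[(\nu_t^{(i)})_2 \,\big|\, \mathcal{F}_{t-1}\big].$$ Then for any $0 < t < \infty$, $$\lim_{N\to\infty}\mathbb{E}\Bigg[\prod_{r=1}^{\tau_N(t)}(1-p_r)\Bigg] = e^{-\alpha_n t}, \qquad \alpha_n := n(n-1)/2.$$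
   Context: $(x)_k$ is the falling factorial; $\mathcal{F}_t := \sigma(\nu_s^{(1:N)}: s\le t)$ ($\mathcal{F}_0$ trivial). $c_N(r) := \frac{1}{(N)_2}\sum_i(\nu_r^{(i)})_2$; $\tau_N(u) := \inf\{s\in\{0,1,\dots\}: \sum_{r=1}^s c_N(r)\ge u\}$. $p_r := 1 - \frac{1}{(N)_n}\sum_{i_1,\dots,i_n\text{ distinct}}\nu_r^{(i_1)}\cdots\nu_r^{(i_n)}$ (one minus the conditional probability, given $\nu_r^{(1:N)}$, that $n$ distinct lineages have distinct parents in one generation). *)

theory Defs
  imports "HOL-Probability.Probability" "HOL-Library.FuncSet"
begin

definition ffac :: "nat \<Rightarrow> real \<Rightarrow> real" where
  "ffac k x = (\<Prod>j<k. (x - real j))"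

text \<open>Natural filtration F_t generated by nu_s^(i), s \<le> t (s \<ge> 1), i < N
  (indices i are 0-based: 0..N-1). F_0 is the trivial sigma algebra.\<close>
definition filt :: "'a measure \<Rightarrow> nat \<Rightarrow> (nat \<Rightarrow> nat \<Rightarrow> 'a \<Rightarrow> nat) \<Rightarrow> nat \<Rightarrow> 'a measure" where
  "filt M N nu t = sigma (space M)
     {nu s i -` A \<inter> space M | s i A. 1 \<le> s \<and> s \<le> t \<and> i < N}"

definition cN :: "nat \<Rightarrow> (nat \<Rightarrow> nat \<Rightarrow> 'a \<Rightarrow> nat) \<Rightarrow> nat \<Rightarrow> 'a \<Rightarrow> real" where
  "cN N nu r \<omega> = (\<Sum>i<N. ffac 2 (real (nu r i \<omega>))) / ffac 2 (real N)"

text \<open>tau_N(u) = inf{s \<ge> 0 : sum_{r=1}^s c_N(r) \<ge> u}; infinite case represented by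
  an unspecified natural number (only matters on a null set).\<close>
definition tauN :: "nat \<Rightarrow> (nat \<Rightarrow> nat \<Rightarrow> 'a \<Rightarrow> nat) \<Rightarrow> real \<Rightarrow> 'a \<Rightarrow> nat" where
  "tauN N nu u \<omega> = (LEAST s. (\<Sum>r\<in>{1..s}. cN N nu r \<omega>) \<ge> u)"

text \<open>p_r = 1 - (1/(N)_n) sum over distinct i_1..i_n of nu_r^(i_1)...nu_r^(i_n);
  tuples of distinct indices are the injective maps {..<n} \<rightarrow> {..<N}.\<close>
definition pr :: "nat \<Rightarrow> nat \<Rightarrow> (nat \<Rightarrow> nat \<Rightarrow> 'a \<Rightarrow> nat) \<Rightarrow> nat \<Rightarrow> 'a \<Rightarrow> real" where
  "pr n N nu r \<omega> = 1 - (\<Sum>f\<in>{f \<in> {..<n} \<rightarrow>\<^sub>E {..<N}. inj_on f {..<n}}.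
        (\<Prod>j<n. real (nu r (f j) \<omega>))) / ffac n (real N)"

end

theory Submission
  imports Defs
begin

text \<open>
  Write X_r = 1 - p_r, alpha = n(n-1)/2 and D_r = sum_i (nu_r^(i))_3 / (N)_3. Within one
  generation, (N)_n X_r is the sum W_n of nu^(i_1) ... nu^(i_n) over distinct i_1, ..., i_n.
  Adding one index at a time gives W_(m+1) = (N - m) W_m - Z_m, where Z_m is the same sum weighted
  by sum_j (nu^(i_j) - 1), and a similar recursion for Z_m shows that Z_m / (N)_(m+1) is m c_N(r)
  up to errors of order c_N(r)/N, c_N(r)^2 and D_r. With c_N(r)^2 <= D_r + c_N(r)/(N-1)
  (Cauchy-Schwarz) this yields |X_r - exp (-alpha c_N(r))| <= eps_N c_N(r) + K D_r, where
  eps_N -> 0 and K stays bounded.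

  Telescoping the product up to tau_N(t), whose overshoot c_N(tau) <= eta + c_N(tau)^2 / eta is
  controlled by the same inequality, bounds the error by
  eps_N (t + 1) + alpha eta + O(1/(N eta)) + (K + alpha/eta) sum_(r <= tau) D_r.
  As {r <= tau_N(t)} is F_(r-1)-measurable, the moment hypothesis gives
  E sum_(r <= tau) D_r <= b_N E sum_(r <= tau) c_N(r) <= b_N (t + 1). Let N -> oo, then eta -> 0.
\<close>

lemma ffac_0 [simp]: "ffac 0 x = 1"
  by (simp add: ffac_def)

lemma ffac_Suc: "ffac (Suc k) x = ffac k x * (x - real k)"
  by (simp add: ffac_def)

lemma ffac_2_eq: "ffac 2 x = x * (x - 1)"
  by (simp add: ffac_def numeral_2_eq_2)

lemma ffac_3_eq: "ffac 3 x = x * (x - 1) * (x - 2)"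
  by (simp add: ffac_def numeral_3_eq_3)

lemma ffac_of_nat_eq_0: "m < k \<Longrightarrow> ffac k (real m) = 0"
  unfolding ffac_def by (intro prod_zero) (auto intro!: bexI[of _ m])

lemma ffac_of_nat_nonneg: "0 \<le> ffac k (real m)"
proof (cases "m < k")
  case False
  then show ?thesis unfolding ffac_def by (intro prod_nonneg) auto
qed (simp add: ffac_of_nat_eq_0)

lemma ffac_pos: "k \<le> N \<Longrightarrow> 0 < ffac k (real N)"
  unfolding ffac_def by (intro prod_pos) auto

lemma ffac_le_power: "k \<le> N \<Longrightarrow> ffac k (real N) \<le> real N ^ k"
  unfolding ffac_def using prod_mono[of "{..<k}" "\<lambda>j. real N - real j" "\<lambda>_. real N"] by auto

lemma ffac_of_nat_le_power: "ffac k (real m) \<le> real m ^ k"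
  by (cases "m < k") (simp_all add: ffac_of_nat_eq_0 ffac_le_power)

lemma power_diff_le_ffac: "k \<le> n \<Longrightarrow> n \<le> N \<Longrightarrow> (real N - real n) ^ k \<le> ffac k (real N)"
  unfolding ffac_def using prod_mono[of "{..<k}" "\<lambda>_. real N - real n" "\<lambda>j. real N - real j"] by auto

section \<open>Sums over tuples of distinct individuals\<close>

definition distinct_tuples :: "nat \<Rightarrow> nat \<Rightarrow> (nat \<Rightarrow> nat) set" where
  "distinct_tuples N m = {f \<in> {..<m} \<rightarrow>\<^sub>E {..<N}. inj_on f {..<m}}"

lemma finite_distinct_tuples: "finite (distinct_tuples N m)"
  unfolding distinct_tuples_def
  by (rule finite_subset[OF _ finite_PiE[of "{..<m}" "\<lambda>_. {..<N}"]]) auto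

lemma distinct_tuples_0: "distinct_tuples N 0 = {\<lambda>_. undefined}"
  unfolding distinct_tuples_def by auto

lemma distinct_tuples_Suc:
  "distinct_tuples N (Suc m) =
     (\<lambda>(g, y). g(m := y)) ` (SIGMA g:distinct_tuples N m. {..<N} - g ` {..<m})"
proof (intro equalityI subsetI)
  fix f assume f: "f \<in> distinct_tuples N (Suc m)"
  define g where "g = f(m := undefined)"
  have fm: "f \<in> insert m {..<m} \<rightarrow>\<^sub>E {..<N}" "inj_on f (insert m {..<m})"
    using f by (auto simp: distinct_tuples_def lessThan_Suc)
  have "g \<in> {..<m} \<rightarrow>\<^sub>E {..<N}"
    unfolding g_def by (rule fun_upd_in_PiE[OF _ fm(1)]) auto
  moreover have "inj_on g {..<m}"
    using fm(2) unfolding g_def inj_on_def by auto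
  moreover have "f m \<in> {..<N} - g ` {..<m}"
    using fm unfolding g_def inj_on_def by auto
  moreover have "f = g(m := f m)"
    unfolding g_def by auto
  ultimately show "f \<in> (\<lambda>(g, y). g(m := y)) ` (SIGMA g:distinct_tuples N m. {..<N} - g ` {..<m})"
    unfolding distinct_tuples_def by (intro image_eqI[of _ _ "(g, f m)"]) auto
next
  fix f assume "f \<in> (\<lambda>(g, y). g(m := y)) ` (SIGMA g:distinct_tuples N m. {..<N} - g ` {..<m})"
  then obtain g y where g: "g \<in> distinct_tuples N m" and y: "y \<in> {..<N} - g ` {..<m}"
    and f: "f = g(m := y)"
    by auto
  have "f \<in> insert m {..<m} \<rightarrow>\<^sub>E {..<N}"
    unfolding f using g y by (intro PiE_fun_upd) (auto simp: distinct_tuples_def)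
  moreover have "inj_on f (insert m {..<m})"
    using g y unfolding f distinct_tuples_def inj_on_def by auto
  ultimately show "f \<in> distinct_tuples N (Suc m)"
    by (simp add: distinct_tuples_def lessThan_Suc)
qed

lemma sum_distinct_tuples_Suc:
  "(\<Sum>f\<in>distinct_tuples N (Suc m). h f) =
     (\<Sum>g\<in>distinct_tuples N m. \<Sum>y\<in>{..<N} - g ` {..<m}. h (g(m := y)))"
proof -
  have inj: "inj_on (\<lambda>(g, y). g(m := y)) (SIGMA g:distinct_tuples N m. {..<N} - g ` {..<m})"
  proof (rule inj_onI, clarsimp)
    fix g y g' y'
    assume g: "g \<in> distinct_tuples N m" "g' \<in> distinct_tuples N m"
      and eq: "g(m := y) = g'(m := y')"
    have "g x = g' x" for x
    proof (cases "x < m")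
      case True
      then show ?thesis using fun_cong[OF eq, of x] by simp
    next
      case False
      then show ?thesis using g by (auto simp: distinct_tuples_def PiE_def extensional_def)
    qed
    then show "g = g' \<and> y = y'" using fun_cong[OF eq, of m] by auto
  qed
  have "(\<Sum>f\<in>distinct_tuples N (Suc m). h f) =
      (\<Sum>p\<in>(SIGMA g:distinct_tuples N m. {..<N} - g ` {..<m}). h ((\<lambda>(g, y). g(m := y)) p))"
    unfolding distinct_tuples_Suc by (rule sum.reindex[OF inj, unfolded comp_def])
  also have "\<dots> = (\<Sum>g\<in>distinct_tuples N m. \<Sum>y\<in>{..<N} - g ` {..<m}. h (g(m := y)))"
    by (subst sum.Sigma) (auto simp: finite_distinct_tuples split_beta)
  finally show ?thesis .
qed

lemma sum_avoiding_tuple: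
  assumes "g \<in> distinct_tuples N m"
  shows "(\<Sum>y\<in>{..<N} - g ` {..<m}. h y) = (\<Sum>y<N. h y) - (\<Sum>j<m. (h (g j) :: real))"
proof -
  have "g ` {..<m} \<subseteq> {..<N}" and "inj_on g {..<m}"
    using assms by (auto simp: distinct_tuples_def)
  then show ?thesis
    by (simp add: sum_diff sum.reindex)
qed

definition tuple_weight :: "(nat \<Rightarrow> nat) \<Rightarrow> nat \<Rightarrow> (nat \<Rightarrow> nat) \<Rightarrow> real" where
  "tuple_weight v m g = (\<Prod>j<m. real (v (g j)))"

definition tuple_excess :: "(nat \<Rightarrow> nat) \<Rightarrow> nat \<Rightarrow> (nat \<Rightarrow> nat) \<Rightarrow> real" where
  "tuple_excess v m g = (\<Sum>j<m. real (v (g j)) - 1)"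

definition tuple_pairs :: "(nat \<Rightarrow> nat) \<Rightarrow> nat \<Rightarrow> (nat \<Rightarrow> nat) \<Rightarrow> real" where
  "tuple_pairs v m g = (\<Sum>j<m. ffac 2 (real (v (g j))))"

definition weight_sum :: "(nat \<Rightarrow> nat) \<Rightarrow> nat \<Rightarrow> nat \<Rightarrow> real" where
  "weight_sum v N m = (\<Sum>g\<in>distinct_tuples N m. tuple_weight v m g)"

definition excess_sum :: "(nat \<Rightarrow> nat) \<Rightarrow> nat \<Rightarrow> nat \<Rightarrow> real" where
  "excess_sum v N m = (\<Sum>g\<in>distinct_tuples N m. tuple_weight v m g * tuple_excess v m g)"

definition pairs_sum :: "(nat \<Rightarrow> nat) \<Rightarrow> nat \<Rightarrow> nat \<Rightarrow> real" where
  "pairs_sum v N m = (\<Sum>g\<in>distinct_tuples N m. tuple_weight v m g * tuple_pairs v m g)"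

definition fmoment :: "nat \<Rightarrow> (nat \<Rightarrow> nat) \<Rightarrow> nat \<Rightarrow> real" where
  "fmoment k v N = (\<Sum>i<N. ffac k (real (v i)))"

lemma tuple_weight_upd: "tuple_weight v (Suc m) (g(m := y)) = tuple_weight v m g * real (v y)"
  by (simp add: tuple_weight_def prod.lessThan_Suc)

lemma tuple_excess_upd: "tuple_excess v (Suc m) (g(m := y)) = tuple_excess v m g + (real (v y) - 1)"
  by (simp add: tuple_excess_def sum.lessThan_Suc)

lemma tuple_pairs_upd: "tuple_pairs v (Suc m) (g(m := y)) = tuple_pairs v m g + ffac 2 (real (v y))"
  by (simp add: tuple_pairs_def sum.lessThan_Suc)

lemma tuple_weight_nonneg: "0 \<le> tuple_weight v m g"
  unfolding tuple_weight_def by (intro prod_nonneg) auto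

lemma tuple_weight_eq_0: "j < m \<Longrightarrow> v (g j) = 0 \<Longrightarrow> tuple_weight v m g = 0"
  unfolding tuple_weight_def by (intro prod_zero) auto

lemma tuple_weight_excess_nonneg: "0 \<le> tuple_weight v m g * tuple_excess v m g"
proof -
  have "0 \<le> tuple_weight v m g * (real (v (g j)) - 1)" if "j < m" for j
    using that tuple_weight_nonneg[of v m g] tuple_weight_eq_0[of j m v g]
    by (cases "v (g j) = 0") auto
  then show ?thesis
    unfolding tuple_excess_def sum_distrib_left by (intro sum_nonneg) auto
qed

lemma tuple_pairs_nonneg: "0 \<le> tuple_pairs v m g"
  unfolding tuple_pairs_def by (intro sum_nonneg ffac_of_nat_nonneg)

text \<open>Cauchy-Schwarz, and \<open>(x - 1)\<^sup>2 \<le> x (x - 1)\<close> on every tuple of positive weight.\<close>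
lemma tuple_weight_excess_sq_le:
  "tuple_weight v m g * (tuple_excess v m g)\<^sup>2 \<le> real m * (tuple_weight v m g * tuple_pairs v m g)"
proof -
  let ?P = "tuple_weight v m g"
  have sq_le: "?P * (real (v (g j)) - 1)\<^sup>2 \<le> ?P * ffac 2 (real (v (g j)))" if "j < m" for j
  proof (cases "v (g j) = 0")
    case False
    then have "(real (v (g j)) - 1)\<^sup>2 \<le> ffac 2 (real (v (g j)))"
      by (simp add: ffac_2_eq power2_eq_square algebra_simps)
    then show ?thesis using tuple_weight_nonneg by (rule mult_left_mono)
  qed (simp add: tuple_weight_eq_0[OF that])
  have "(tuple_excess v m g)\<^sup>2 \<le> (\<Sum>j<m. (real (v (g j)) - 1)\<^sup>2) * real m"
    unfolding tuple_excess_def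
    using sum_squared_le_sum_of_squares[of "\<lambda>j. real (v (g j)) - 1" "{..<m}"] by simp
  then have "?P * (tuple_excess v m g)\<^sup>2 \<le> ?P * ((\<Sum>j<m. (real (v (g j)) - 1)\<^sup>2) * real m)"
    using tuple_weight_nonneg by (rule mult_left_mono)
  also have "\<dots> = real m * (\<Sum>j<m. ?P * (real (v (g j)) - 1)\<^sup>2)"
    by (simp add: sum_distrib_left sum_distrib_right mult_ac)
  also have "\<dots> \<le> real m * (?P * tuple_pairs v m g)"
    unfolding tuple_pairs_def sum_distrib_left by (intro mult_left_mono sum_mono sq_le) auto
  finally show ?thesis .
qed

lemma sum_tuple_eq_excess: "(\<Sum>j<m. real (v (g j))) = tuple_excess v m g + real m"
  unfolding tuple_excess_def by (simp add: sum_subtractf)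

lemma weight_sum_0 [simp]: "weight_sum v N 0 = 1"
  by (simp add: weight_sum_def distinct_tuples_0 tuple_weight_def)

lemma excess_sum_0 [simp]: "excess_sum v N 0 = 0"
  by (simp add: excess_sum_def distinct_tuples_0 tuple_excess_def)

lemma pairs_sum_0 [simp]: "pairs_sum v N 0 = 0"
  by (simp add: pairs_sum_def distinct_tuples_0 tuple_pairs_def)

lemma weight_sum_nonneg: "0 \<le> weight_sum v N m"
  unfolding weight_sum_def by (intro sum_nonneg tuple_weight_nonneg)

lemma excess_sum_nonneg: "0 \<le> excess_sum v N m"
  unfolding excess_sum_def by (intro sum_nonneg tuple_weight_excess_nonneg)

lemma pairs_sum_nonneg: "0 \<le> pairs_sum v N m"
  unfolding pairs_sum_def by (intro sum_nonneg mult_nonneg_nonneg tuple_weight_nonneg tuple_pairs_nonneg)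

lemma fmoment_nonneg: "0 \<le> fmoment k v N"
  unfolding fmoment_def by (intro sum_nonneg ffac_of_nat_nonneg)

context
  fixes v :: "nat \<Rightarrow> nat" and N :: nat
  assumes total: "(\<Sum>i<N. v i) = N"
begin

private lemma total_real: "(\<Sum>i<N. real (v i)) = real N"
  using total by (metis of_nat_sum)

private lemma sum_avoiding_tuple_eq:
  "g \<in> distinct_tuples N m \<Longrightarrow>
     (\<Sum>y\<in>{..<N} - g ` {..<m}. real (v y)) = real N - (tuple_excess v m g + real m)"
  by (simp add: sum_avoiding_tuple total_real sum_tuple_eq_excess)

lemma weight_sum_Suc:
  "weight_sum v N (Suc m) = (real N - real m) * weight_sum v N m - excess_sum v N m"
proof -
  have "weight_sum v N (Suc m) =
      (\<Sum>g\<in>distinct_tuples N m. tuple_weight v m g * (\<Sum>y\<in>{..<N} - g ` {..<m}. real (v y)))"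
    unfolding weight_sum_def sum_distinct_tuples_Suc tuple_weight_upd sum_distrib_left ..
  also have "\<dots> = (\<Sum>g\<in>distinct_tuples N m.
      (real N - real m) * tuple_weight v m g - tuple_weight v m g * tuple_excess v m g)"
    by (intro sum.cong refl) (simp add: sum_avoiding_tuple_eq algebra_simps)
  finally show ?thesis
    by (simp add: weight_sum_def excess_sum_def sum_subtractf sum_distrib_left)
qed

lemma excess_sum_Suc:
  "excess_sum v N (Suc m) = (real N - real m) * excess_sum v N m
     - (\<Sum>g\<in>distinct_tuples N m. tuple_weight v m g * (tuple_excess v m g)\<^sup>2)
     + fmoment 2 v N * weight_sum v N m - pairs_sum v N m"
proof -
  let ?P = "tuple_weight v m" and ?Y = "tuple_excess v m" and ?S = "tuple_pairs v m"
  have "excess_sum v N (Suc m) = (\<Sum>g\<in>distinct_tuples N m. \<Sum>y\<in>{..<N} - g ` {..<m}.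
      ?P g * ?Y g * real (v y) + ?P g * ffac 2 (real (v y)))"
    unfolding excess_sum_def sum_distinct_tuples_Suc tuple_weight_upd tuple_excess_upd
    by (intro sum.cong refl) (simp add: ffac_2_eq algebra_simps)
  also have "\<dots> = (\<Sum>g\<in>distinct_tuples N m.
      ?P g * ?Y g * (real N - (?Y g + real m)) + ?P g * (fmoment 2 v N - ?S g))"
  proof (intro sum.cong refl)
    fix g assume g: "g \<in> distinct_tuples N m"
    have "(\<Sum>y\<in>{..<N} - g ` {..<m}. ?P g * ?Y g * real (v y) + ?P g * ffac 2 (real (v y)))
        = ?P g * ?Y g * (\<Sum>y\<in>{..<N} - g ` {..<m}. real (v y))
          + ?P g * (\<Sum>y\<in>{..<N} - g ` {..<m}. ffac 2 (real (v y)))"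
      by (simp add: sum.distrib sum_distrib_left)
    then show "(\<Sum>y\<in>{..<N} - g ` {..<m}. ?P g * ?Y g * real (v y) + ?P g * ffac 2 (real (v y)))
        = ?P g * ?Y g * (real N - (?Y g + real m)) + ?P g * (fmoment 2 v N - ?S g)"
      unfolding sum_avoiding_tuple_eq[OF g] sum_avoiding_tuple[OF g]
      by (simp add: fmoment_def tuple_pairs_def)
  qed
  also have "\<dots> = (\<Sum>g\<in>distinct_tuples N m. (real N - real m) * (?P g * ?Y g)
      - ?P g * (?Y g)\<^sup>2 + fmoment 2 v N * ?P g - ?P g * ?S g)"
    by (intro sum.cong refl) (simp add: algebra_simps power2_eq_square)
  finally show ?thesis
    by (simp add: weight_sum_def excess_sum_def pairs_sum_def sum_subtractf sum.distrib
        sum_distrib_left)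
qed

lemma pairs_sum_Suc_le:
  "pairs_sum v N (Suc m) \<le> real N * pairs_sum v N m + (fmoment 3 v N + 2 * fmoment 2 v N) * weight_sum v N m"
proof -
  let ?P = "tuple_weight v m" and ?S = "tuple_pairs v m"
  let ?K = "fmoment 3 v N + 2 * fmoment 2 v N"
  have cubic: "(\<Sum>y<N. real (v y) * ffac 2 (real (v y))) = ?K"
    unfolding fmoment_def sum_distrib_left sum.distrib[symmetric]
    by (rule sum.cong) (simp_all add: ffac_2_eq ffac_3_eq algebra_simps)
  have "pairs_sum v N (Suc m) = (\<Sum>g\<in>distinct_tuples N m.
      ?P g * ?S g * (\<Sum>y\<in>{..<N} - g ` {..<m}. real (v y))
      + ?P g * (\<Sum>y\<in>{..<N} - g ` {..<m}. real (v y) * ffac 2 (real (v y))))"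
    unfolding pairs_sum_def sum_distinct_tuples_Suc tuple_weight_upd tuple_pairs_upd
    by (intro sum.cong refl) (simp add: sum_distrib_left sum.distrib algebra_simps)
  also have "\<dots> \<le> (\<Sum>g\<in>distinct_tuples N m. real N * (?P g * ?S g) + ?K * ?P g)"
  proof (intro sum_mono add_mono)
    fix g assume g: "g \<in> distinct_tuples N m"
    have "0 \<le> (?P g * tuple_excess v m g) * ?S g + real m * (?P g * ?S g)"
      using mult_nonneg_nonneg[OF tuple_weight_excess_nonneg tuple_pairs_nonneg]
        tuple_weight_nonneg[of v m g] tuple_pairs_nonneg[of v m g]
      by (intro add_nonneg_nonneg) auto
    then have "0 \<le> ?P g * ?S g * (tuple_excess v m g + real m)"
      by (simp add: algebra_simps)
    then show "?P g * ?S g * (\<Sum>y\<in>{..<N} - g ` {..<m}. real (v y)) \<le> real N * (?P g * ?S g)"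
      unfolding sum_avoiding_tuple_eq[OF g] by (simp add: algebra_simps)
    have "0 \<le> (\<Sum>j<m. real (v (g j)) * ffac 2 (real (v (g j))))"
      by (intro sum_nonneg mult_nonneg_nonneg ffac_of_nat_nonneg) auto
    then show "?P g * (\<Sum>y\<in>{..<N} - g ` {..<m}. real (v y) * ffac 2 (real (v y))) \<le> ?K * ?P g"
      using tuple_weight_nonneg[of v m g]
      by (simp add: sum_avoiding_tuple[OF g] cubic mult.commute mult_left_mono)
  qed
  finally show ?thesis
    by (simp add: weight_sum_def pairs_sum_def sum.distrib sum_distrib_left)
qed

lemma excess_sum_Suc_le:
  "m \<le> N \<Longrightarrow> excess_sum v N (Suc m) \<le> real N * excess_sum v N m + fmoment 2 v N * weight_sum v N m"
  using excess_sum_nonneg[of v N m] pairs_sum_nonneg[of v N m]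
    sum_nonneg[of "distinct_tuples N m" "\<lambda>g. tuple_weight v m g * (tuple_excess v m g)\<^sup>2"]
    tuple_weight_nonneg
  by (simp add: excess_sum_Suc algebra_simps)

lemma excess_sum_Suc_ge:
  "(real N - real m) * excess_sum v N m + fmoment 2 v N * weight_sum v N m
     - (real m + 1) * pairs_sum v N m \<le> excess_sum v N (Suc m)"
proof -
  have "(\<Sum>g\<in>distinct_tuples N m. tuple_weight v m g * (tuple_excess v m g)\<^sup>2)
      \<le> (\<Sum>g\<in>distinct_tuples N m. real m * (tuple_weight v m g * tuple_pairs v m g))"
    by (intro sum_mono tuple_weight_excess_sq_le)
  also have "\<dots> = real m * pairs_sum v N m"
    by (simp add: pairs_sum_def sum_distrib_left)
  finally show ?thesis
    by (simp add: excess_sum_Suc algebra_simps)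
qed

lemma weight_sum_le_ffac: "m \<le> N \<Longrightarrow> weight_sum v N m \<le> ffac m (real N)"
proof (induction m)
  case (Suc m)
  then have "(real N - real m) * weight_sum v N m \<le> (real N - real m) * ffac m (real N)"
    by (intro mult_left_mono) auto
  then show ?case
    using excess_sum_nonneg[of v N m] by (simp add: weight_sum_Suc ffac_Suc algebra_simps)
qed simp

lemma weight_sum_le_power: "m \<le> N \<Longrightarrow> weight_sum v N m \<le> real N ^ m"
  using weight_sum_le_ffac ffac_le_power order_trans by blast

lemma pairs_sum_le:
  "m \<le> N \<Longrightarrow> pairs_sum v N m * real N \<le> real m * (fmoment 3 v N + 2 * fmoment 2 v N) * real N ^ m"
proof (induction m)
  case (Suc m)
  let ?K = "fmoment 3 v N + 2 * fmoment 2 v N"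
  have K: "0 \<le> ?K" using fmoment_nonneg[of 3 v N] fmoment_nonneg[of 2 v N] by simp
  have "pairs_sum v N (Suc m) * real N \<le> (real N * pairs_sum v N m + ?K * weight_sum v N m) * real N"
    by (intro mult_right_mono pairs_sum_Suc_le) auto
  also have "\<dots> = real N * (pairs_sum v N m * real N) + ?K * weight_sum v N m * real N"
    by (simp add: algebra_simps)
  also have "\<dots> \<le> real N * (real m * ?K * real N ^ m) + ?K * real N ^ m * real N"
    using Suc K by (intro add_mono mult_left_mono mult_right_mono weight_sum_le_power) auto
  finally show ?case by (simp add: algebra_simps)
qed simp

lemma excess_sum_le: "m \<le> N \<Longrightarrow> excess_sum v N m * real N \<le> real m * fmoment 2 v N * real N ^ m"
proof (induction m)
  case (Suc m)
  have "excess_sum v N (Suc m) * real N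
      \<le> (real N * excess_sum v N m + fmoment 2 v N * weight_sum v N m) * real N"
    using Suc.prems by (intro mult_right_mono excess_sum_Suc_le) auto
  also have "\<dots> = real N * (excess_sum v N m * real N) + fmoment 2 v N * weight_sum v N m * real N"
    by (simp add: algebra_simps)
  also have "\<dots> \<le> real N * (real m * fmoment 2 v N * real N ^ m) + fmoment 2 v N * real N ^ m * real N"
    using Suc fmoment_nonneg[of 2 v N]
    by (intro add_mono mult_left_mono mult_right_mono weight_sum_le_power) auto
  finally show ?case by (simp add: algebra_simps)
qed simp

lemma one_minus_weight_ratio:
  "k \<le> N \<Longrightarrow> 1 - weight_sum v N k / ffac k (real N) =
     (\<Sum>m<k. excess_sum v N m / ffac (Suc m) (real N))"
proof (induction k)
  case (Suc k)
  have "0 < ffac k (real N)" "0 < real N - real k"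
    using Suc.prems by (auto intro: ffac_pos)
  then have "weight_sum v N (Suc k) / ffac (Suc k) (real N)
      = weight_sum v N k / ffac k (real N) - excess_sum v N k / ffac (Suc k) (real N)"
    by (simp add: weight_sum_Suc ffac_Suc field_simps)
  then show ?case using Suc by simp
qed simp

end

section \<open>One generation: the probability of no merger\<close>

definition npairs :: "nat \<Rightarrow> real" where
  "npairs n = real n * (real n - 1) / 2"

definition ffac_slack :: "nat \<Rightarrow> nat \<Rightarrow> real" where
  "ffac_slack N n = (real N / (real N - real n)) ^ n"

definition frate :: "nat \<Rightarrow> (nat \<Rightarrow> nat) \<Rightarrow> nat \<Rightarrow> real" where
  "frate k v N = fmoment k v N / ffac k (real N)"

lemma npairs_eq_sum: "npairs n = (\<Sum>m<n. real m)"
  unfolding npairs_def by (induction n) (simp_all add: algebra_simps)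

lemma npairs_nonneg: "0 \<le> npairs n"
  unfolding npairs_eq_sum by (intro sum_nonneg) auto

lemma ffac_slack_ge_1: "n < N \<Longrightarrow> 1 \<le> ffac_slack N n"
  unfolding ffac_slack_def by (intro one_le_power) (simp add: field_simps)

lemma power_le_ffac_slack:
  assumes "k \<le> n" "n < N"
  shows "real N ^ k \<le> ffac_slack N n * ffac k (real N)"
proof -
  define q where "q = real N / (real N - real n)"
  have "1 \<le> q" "0 < real N - real n"
    unfolding q_def using assms by (simp_all add: field_simps)
  then have "real N ^ k = q ^ k * (real N - real n) ^ k"
    unfolding q_def by (simp add: power_divide)
  also have "\<dots> \<le> q ^ n * ffac k (real N)"
    using assms \<open>1 \<le> q\<close> \<open>0 < real N - real n\<close>
    by (intro mult_mono power_increasing power_diff_le_ffac) auto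
  finally show ?thesis unfolding ffac_slack_def q_def .
qed

lemma ratio_le_of_power_bounds:
  fixes A B R F x :: real
  assumes "A * x \<le> B * x ^ m" "x ^ (m + j) \<le> R * F" "0 < F" "0 < x" "0 \<le> B"
  shows "A / F \<le> B * R / x ^ (j + 1)"
proof -
  have "A * x * x ^ (m + j) \<le> B * x ^ m * x ^ (m + j)"
    using assms by (intro mult_right_mono) auto
  also have "\<dots> \<le> B * x ^ m * (R * F)"
    using assms by (intro mult_left_mono) auto
  finally have "(A * x ^ (j + 1)) * x ^ m \<le> (B * R * F) * x ^ m"
    by (simp add: power_add algebra_simps)
  then have "A * x ^ (j + 1) \<le> B * R * F"
    using assms(4) by simp
  then show ?thesis
    using assms(3,4) by (simp add: field_simps)
qed

lemma fmoment_2_div_sq_le: "2 \<le> N \<Longrightarrow> fmoment 2 v N / real N ^ 2 \<le> frate 2 v N"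
  unfolding frate_def using fmoment_nonneg[of 2 v N]
  by (intro divide_left_mono mult_pos_pos ffac_pos ffac_le_power) auto

lemma frate_nonneg: "0 \<le> frate k v N"
  unfolding frate_def using fmoment_nonneg[of k v N] ffac_of_nat_nonneg[of k N] by simp

context
  fixes v :: "nat \<Rightarrow> nat" and N :: nat
  assumes total: "(\<Sum>i<N. v i) = N" and N_ge_3: "3 \<le> N"
begin

lemma frate_2_le_1: "frate 2 v N \<le> 1"
proof -
  have total_real: "(\<Sum>i<N. real (v i)) = real N"
    using total by (metis of_nat_sum)
  have "real (v i) \<le> real N" if "i < N" for i
    using member_le_sum[of i "{..<N}" v] that total by simp
  then have "(\<Sum>i<N. real (v i) * real (v i)) \<le> (\<Sum>i<N. real (v i) * real N)"
    by (intro sum_mono mult_left_mono) auto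
  then have "fmoment 2 v N \<le> ffac 2 (real N)"
    unfolding fmoment_def ffac_2_eq
    by (simp add: sum_subtractf right_diff_distrib total_real sum_distrib_right[symmetric])
  then show ?thesis
    unfolding frate_def using ffac_pos[of 2 N] N_ge_3 by simp
qed

text \<open>Cauchy-Schwarz applied to \<open>\<Sum> \<surd>v\<^sub>i \<cdot> \<surd>v\<^sub>i (v\<^sub>i - 1)\<close>, using \<open>\<Sum> v\<^sub>i = N\<close>.\<close>
lemma frate_2_sq_le: "(frate 2 v N)\<^sup>2 \<le> frate 3 v N + frate 2 v N / (real N - 1)"
proof -
  let ?Q = "fmoment 2 v N" and ?T = "fmoment 3 v N" and ?x = "real N"
  have "(\<Sum>i<N. sqrt (real (v i)) * (sqrt (real (v i)) * (real (v i) - 1)))\<^sup>2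
      \<le> (\<Sum>i<N. (sqrt (real (v i)))\<^sup>2) * (\<Sum>i<N. (sqrt (real (v i)) * (real (v i) - 1))\<^sup>2)"
    by (rule Cauchy_Schwarz_ineq_sum)
  moreover have "(\<Sum>i<N. sqrt (real (v i)) * (sqrt (real (v i)) * (real (v i) - 1))) = ?Q"
    unfolding fmoment_def ffac_2_eq by (intro sum.cong) (auto simp: mult.assoc[symmetric])
  moreover have "(\<Sum>i<N. (sqrt (real (v i)))\<^sup>2) = ?x"
    using total by (simp flip: of_nat_sum)
  moreover have "(\<Sum>i<N. (sqrt (real (v i)) * (real (v i) - 1))\<^sup>2) = ?T + ?Q"
    unfolding fmoment_def ffac_2_eq ffac_3_eq sum.distrib[symmetric]
    by (intro sum.cong) (auto simp: power_mult_distrib power2_eq_square algebra_simps)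
  ultimately have CS: "?Q\<^sup>2 \<le> ?x * (?T + ?Q)"
    by simp
  have x: "?x \<noteq> 0" "?x - 1 \<noteq> 0" "?x - 2 \<noteq> 0" "0 < ?x - 1"
    using N_ge_3 by auto
  have "(frate 2 v N)\<^sup>2 \<le> ?x * (?T + ?Q) / (?x * (?x - 1))\<^sup>2"
    unfolding frate_def ffac_2_eq using CS by (simp add: power_divide divide_right_mono)
  also have "\<dots> = (?T + ?Q) / (?x * (?x - 1) * (?x - 1))"
    using x by (simp add: power2_eq_square)
  also have "\<dots> = frate 3 v N * ((?x - 2) / (?x - 1)) + frate 2 v N / (?x - 1)"
    unfolding frate_def ffac_2_eq ffac_3_eq using x by (simp add: add_divide_distrib)
  also have "\<dots> \<le> frate 3 v N + frate 2 v N / (?x - 1)"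
    using mult_left_mono[of "(?x - 2) / (?x - 1)" 1 "frate 3 v N"] frate_nonneg[of 3 v N] x(4)
    by simp
  finally show ?thesis .
qed

end

lemma exp_neg_le_quadratic:
  fixes y :: real
  assumes "0 \<le> y"
  shows "exp (- y) \<le> 1 - y + y\<^sup>2"
proof -
  have "exp (- y) * (1 + y) \<le> exp (- y) * exp y"
    by (intro mult_left_mono) auto
  also have "\<dots> = 1"
    by (simp flip: exp_add)
  also have "\<dots> \<le> (1 - y + y\<^sup>2) * (1 + y)"
    using assms by (simp add: algebra_simps power2_eq_square power3_eq_cube[symmetric])
  finally show ?thesis
    using assms by (simp add: mult_le_cancel_right_pos add_pos_nonneg)
qed

definition pair_error :: "nat \<Rightarrow> nat \<Rightarrow> real" where
  "pair_error N n = npairs n * (ffac_slack N n - 1) + npairs n / real N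
     + 2 * npairs n * real n ^ 2 * ffac_slack N n / real N
     + ((npairs n)\<^sup>2 * ffac_slack N n + (npairs n)\<^sup>2) / (real N - 1)"

definition triple_error :: "nat \<Rightarrow> nat \<Rightarrow> real" where
  "triple_error N n = (npairs n)\<^sup>2 * ffac_slack N n + npairs n * real n ^ 2 * ffac_slack N n
     + (npairs n)\<^sup>2"

lemma pair_error_nonneg: "n < N \<Longrightarrow> 2 \<le> N \<Longrightarrow> 0 \<le> pair_error N n"
proof -
  assume "n < N" "2 \<le> N"
  then have "0 \<le> npairs n" "1 \<le> ffac_slack N n" "0 < real N - 1"
    using npairs_nonneg ffac_slack_ge_1 by auto
  then show ?thesis
    unfolding pair_error_def by (simp add: add_nonneg_nonneg)
qed

lemma triple_error_nonneg: "n < N \<Longrightarrow> 0 \<le> triple_error N n"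
  unfolding triple_error_def using npairs_nonneg[of n] ffac_slack_ge_1[of n N] by simp

context
  fixes v :: "nat \<Rightarrow> nat" and N n :: nat
  assumes total: "(\<Sum>i<N. v i) = N" and n_less: "n < N" and N_ge_3: "3 \<le> N"
begin

lemma excess_ratio_le:
  "m < n \<Longrightarrow> excess_sum v N m / ffac (Suc m) (real N)
     \<le> real m * fmoment 2 v N * ffac_slack N n / real N ^ 2"
  using ratio_le_of_power_bounds[of "excess_sum v N m" "real N" "real m * fmoment 2 v N" m 1
      "ffac_slack N n" "ffac (Suc m) (real N)"]
    excess_sum_le[OF total, of m] power_le_ffac_slack[of "Suc m" n N] n_less
    ffac_pos[of "Suc m" N] fmoment_nonneg[of 2 v N]
  by (simp add: power2_eq_square)

lemma one_minus_weight_ratio_le: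
  assumes "k \<le> n"
  shows "1 - weight_sum v N k / ffac k (real N)
    \<le> npairs k * ffac_slack N n * (fmoment 2 v N / real N ^ 2)"
proof -
  have "1 - weight_sum v N k / ffac k (real N) = (\<Sum>m<k. excess_sum v N m / ffac (Suc m) (real N))"
    using one_minus_weight_ratio[OF total, of k] assms n_less by simp
  also have "\<dots> \<le> (\<Sum>m<k. real m * fmoment 2 v N * ffac_slack N n / real N ^ 2)"
    using assms by (intro sum_mono excess_ratio_le) auto
  also have "\<dots> = npairs k * ffac_slack N n * (fmoment 2 v N / real N ^ 2)"
    unfolding npairs_eq_sum sum_distrib_right by (intro sum.cong) simp_all
  finally show ?thesis .
qed

lemma weight_ratio_ge:
  assumes "m \<le> n"
  shows "1 - npairs n * ffac_slack N n * frate 2 v N \<le> weight_sum v N m / ffac m (real N)"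
proof -
  have "npairs m \<le> npairs n"
    unfolding npairs_eq_sum using assms by (intro sum_mono2) auto
  then have "npairs m * ffac_slack N n * (fmoment 2 v N / real N ^ 2)
      \<le> npairs n * ffac_slack N n * frate 2 v N"
    using ffac_slack_ge_1[OF n_less] fmoment_nonneg[of 2 v N] fmoment_2_div_sq_le[of N v] N_ge_3
    by (intro mult_mono mult_nonneg_nonneg npairs_nonneg) auto
  then show ?thesis
    using one_minus_weight_ratio_le[OF assms] by simp
qed

lemma pairs_ratio_le:
  assumes "Suc (Suc m) \<le> n"
  shows "(real m + 1) * pairs_sum v N m / ffac (Suc (Suc m)) (real N)
    \<le> real n ^ 2 * ffac_slack N n * (fmoment 3 v N + 2 * fmoment 2 v N) / real N ^ 3"
proof -
  let ?K = "fmoment 3 v N + 2 * fmoment 2 v N"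
  have K: "0 \<le> ?K"
    using fmoment_nonneg[of 3 v N] fmoment_nonneg[of 2 v N] by simp
  have "(real m + 1) * pairs_sum v N m * real N \<le> ((real m + 1) * real m * ?K) * real N ^ m"
    using pairs_sum_le[OF total, of m] assms n_less by (simp add: mult.assoc mult_left_mono)
  then have "(real m + 1) * pairs_sum v N m / ffac (Suc (Suc m)) (real N)
      \<le> ((real m + 1) * real m * ?K) * ffac_slack N n / real N ^ 3"
    using ratio_le_of_power_bounds[of _ "real N" _ m 2 "ffac_slack N n" "ffac (Suc (Suc m)) (real N)"]
      power_le_ffac_slack[of "m + 2" n N] assms n_less ffac_pos[of "Suc (Suc m)" N] K
    by (simp add: numeral_2_eq_2 numeral_3_eq_3)
  also have "\<dots> \<le> real n ^ 2 * ffac_slack N n * ?K / real N ^ 3"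
  proof -
    have "(real m + 1) * real m \<le> real n * real n"
      using assms by (intro mult_mono) auto
    then have "(real m + 1) * real m * (?K * ffac_slack N n) \<le> real n * real n * (?K * ffac_slack N n)"
      using K ffac_slack_ge_1[OF n_less] by (intro mult_right_mono) auto
    then show ?thesis
      by (simp add: power2_eq_square mult_ac divide_right_mono)
  qed
  finally show ?thesis .
qed

lemma fmoment_2_weight_ratio_ge:
  assumes "Suc m < n"
  shows "fmoment 2 v N / real N ^ 2 * (1 - npairs n * ffac_slack N n * frate 2 v N)
    \<le> fmoment 2 v N * weight_sum v N m / ffac (Suc (Suc m)) (real N)"
proof -
  let ?F0 = "ffac m (real N)" and ?F2 = "ffac (Suc (Suc m)) (real N)"
  let ?W = "weight_sum v N m" and ?Q = "fmoment 2 v N"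
  have F0: "0 < ?F0" and F2: "0 < ?F2" and N_m: "1 < real N - real m"
    using assms n_less by (auto intro: ffac_pos)
  have "?F2 = ?F0 * ((real N - real m) * (real N - real m - 1))"
    by (simp add: ffac_Suc algebra_simps)
  also have "\<dots> \<le> ?F0 * real N ^ 2"
    using F0 N_m by (intro mult_left_mono) (auto simp: power2_eq_square intro!: mult_mono)
  finally have "?Q * ?W / (?F0 * real N ^ 2) \<le> ?Q * ?W / ?F2"
    using F2 fmoment_nonneg[of 2 v N] weight_sum_nonneg[of v N m] by (intro divide_left_mono) auto
  moreover have "?Q / real N ^ 2 * (1 - npairs n * ffac_slack N n * frate 2 v N) \<le> ?Q / real N ^ 2 * (?W / ?F0)"
    using weight_ratio_ge[of m] assms fmoment_nonneg[of 2 v N] by (intro mult_left_mono) auto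
  ultimately show ?thesis
    by (simp add: mult.commute)
qed

lemma excess_ratio_ge:
  fixes \<delta> :: real
  defines "\<delta> \<equiv> fmoment 2 v N / real N ^ 2 * (1 - npairs n * ffac_slack N n * frate 2 v N)
      - real n ^ 2 * ffac_slack N n * (fmoment 3 v N + 2 * fmoment 2 v N) / real N ^ 3"
  shows "m < n \<Longrightarrow> real m * \<delta> \<le> excess_sum v N m / ffac (Suc m) (real N)"
proof (induction m)
  case (Suc m)
  let ?F0 = "ffac m (real N)" and ?F1 = "ffac (Suc m) (real N)" and ?F2 = "ffac (Suc (Suc m)) (real N)"
  let ?Z = "excess_sum v N m" and ?W = "weight_sum v N m" and ?Q = "fmoment 2 v N"
  have F0: "0 < ?F0" and F2: "0 < ?F2"
    using Suc.prems n_less by (auto intro: ffac_pos)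
  have N_m: "1 < real N - real m"
    using Suc.prems n_less by simp
  have excess_term: "?Z / ?F1 \<le> (real N - real m) * ?Z / ?F2"
  proof -
    have "0 \<le> ?Z / ?F1"
      using excess_sum_nonneg[of v N m] F0 N_m by (simp add: ffac_Suc)
    then have "?Z / ?F1 * 1 \<le> ?Z / ?F1 * ((real N - real m) / (real N - real m - 1))"
      using N_m by (intro mult_left_mono) auto
    also have "\<dots> = (real N - real m) * ?Z / ?F2"
      by (simp add: ffac_Suc)
    finally show ?thesis by simp
  qed
  have "((real N - real m) * ?Z + ?Q * ?W - (real m + 1) * pairs_sum v N m) / ?F2
      \<le> excess_sum v N (Suc m) / ?F2"
    using excess_sum_Suc_ge[OF total, of m] F2 by (intro divide_right_mono) auto
  then show ?case
    using Suc excess_term fmoment_2_weight_ratio_ge[of m] pairs_ratio_le[of m]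
    by (simp add: \<delta>_def add_divide_distrib diff_divide_distrib algebra_simps)
qed simp


lemma weight_ratio_bounds:
  "0 \<le> weight_sum v N n / ffac n (real N)" "weight_sum v N n / ffac n (real N) \<le> 1"
proof -
  have "0 \<le> (\<Sum>m<n. excess_sum v N m / ffac (Suc m) (real N))"
    using n_less by (intro sum_nonneg divide_nonneg_pos excess_sum_nonneg ffac_pos) auto
  then show "weight_sum v N n / ffac n (real N) \<le> 1"
    using one_minus_weight_ratio[OF total, of n] n_less by simp
  show "0 \<le> weight_sum v N n / ffac n (real N)"
    using weight_sum_nonneg ffac_pos[of n N] n_less by simp
qed

lemma one_minus_weight_ratio_le_pairs:
  "1 - weight_sum v N n / ffac n (real N) \<le> npairs n * ffac_slack N n * frate 2 v N"
  using one_minus_weight_ratio_le[OF order.refl]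
    mult_left_mono[OF fmoment_2_div_sq_le, of N "npairs n * ffac_slack N n" v]
    npairs_nonneg[of n] ffac_slack_ge_1[OF n_less] N_ge_3
  by simp

lemma one_minus_weight_ratio_ge:
  fixes a c D :: real
  defines "a \<equiv> npairs n" and "c \<equiv> frate 2 v N" and "D \<equiv> frate 3 v N"
  shows "a * c - a * c / real N - a\<^sup>2 * ffac_slack N n * c\<^sup>2
      - a * real n ^ 2 * ffac_slack N n * (D + 2 * c / real N)
    \<le> 1 - weight_sum v N n / ffac n (real N)"
proof -
  let ?\<rho> = "ffac_slack N n" and ?Q = "fmoment 2 v N" and ?T = "fmoment 3 v N" and ?x = "real N"
  define \<delta> where "\<delta> = ?Q / ?x ^ 2 * (1 - a * ?\<rho> * c) - real n ^ 2 * ?\<rho> * (?T + 2 * ?Q) / ?x ^ 3"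
  have x: "0 < ?x" "?x - 1 \<noteq> 0"
    using N_ge_3 by auto
  have a: "0 \<le> a" and c: "0 \<le> c" and \<rho>: "1 \<le> ?\<rho>"
    unfolding a_def c_def using npairs_nonneg frate_nonneg ffac_slack_ge_1[OF n_less] by auto
  have "a * \<delta> = (\<Sum>m<n. real m * \<delta>)"
    by (simp add: a_def npairs_eq_sum sum_distrib_right)
  also have "\<dots> \<le> (\<Sum>m<n. excess_sum v N m / ffac (Suc m) (real N))"
    unfolding \<delta>_def a_def c_def by (intro sum_mono excess_ratio_ge) auto
  also have "\<dots> = 1 - weight_sum v N n / ffac n (real N)"
    using one_minus_weight_ratio[OF total, of n] n_less by simp
  finally have lower: "a * \<delta> \<le> 1 - weight_sum v N n / ffac n (real N)" .
  have "c - c / ?x = c * (?x - 1) / ?x"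
    using x by (simp add: field_simps)
  then have Q_eq: "?Q / ?x ^ 2 = c - c / ?x"
    unfolding c_def frate_def ffac_2_eq using x by (simp add: power2_eq_square)
  have "?T / ?x ^ 3 \<le> D"
    unfolding D_def frate_def using fmoment_nonneg[of 3 v N] N_ge_3
    by (intro divide_left_mono mult_pos_pos ffac_pos ffac_le_power) auto
  moreover have "2 * ?Q / ?x ^ 3 \<le> 2 * c / ?x"
    using fmoment_2_div_sq_le[of N v] N_ge_3 x unfolding c_def
    by (simp add: power3_eq_cube power2_eq_square divide_right_mono flip: divide_divide_eq_left)
  ultimately have "(?T + 2 * ?Q) / ?x ^ 3 \<le> D + 2 * c / ?x"
    by (simp add: add_divide_distrib)
  then have triple: "a * real n ^ 2 * ?\<rho> * ((?T + 2 * ?Q) / ?x ^ 3)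
      \<le> a * real n ^ 2 * ?\<rho> * (D + 2 * c / ?x)"
    using a \<rho> by (intro mult_left_mono) auto
  have "a * (c - c / ?x) * (a * ?\<rho> * c) \<le> a * c * (a * ?\<rho> * c)"
    using a c \<rho> x by (intro mult_right_mono mult_left_mono) auto
  then have square: "a * (c - c / ?x) * (a * ?\<rho> * c) \<le> a\<^sup>2 * ?\<rho> * c\<^sup>2"
    by (simp add: power2_eq_square mult_ac)
  have "a * \<delta> = a * c - a * c / ?x - a * (c - c / ?x) * (a * ?\<rho> * c)
      - a * real n ^ 2 * ?\<rho> * ((?T + 2 * ?Q) / ?x ^ 3)"
    unfolding \<delta>_def Q_eq by (simp add: algebra_simps)
  then show ?thesis
    using lower triple square by linarith
qed

lemma weight_ratio_exp_error:
  "\<bar>weight_sum v N n / ffac n (real N) - exp (- (npairs n * frate 2 v N))\<bar>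
    \<le> pair_error N n * frate 2 v N + triple_error N n * frate 3 v N"
proof -
  let ?X = "weight_sum v N n / ffac n (real N)" and ?\<rho> = "ffac_slack N n"
  let ?a = "npairs n" and ?c = "frate 2 v N" and ?D = "frate 3 v N" and ?x = "real N"
  have a: "0 \<le> ?a" and c: "0 \<le> ?c" and D: "0 \<le> ?D" and \<rho>: "1 \<le> ?\<rho>" and x: "1 < ?x - 1"
    using npairs_nonneg frate_nonneg ffac_slack_ge_1[OF n_less] N_ge_3 by auto
  have c_sq: "?c\<^sup>2 \<le> ?D + ?c / (?x - 1)"
    by (rule frate_2_sq_le[OF total N_ge_3])
  have "?a\<^sup>2 * ?c\<^sup>2 \<le> ?a\<^sup>2 * (?D + ?c / (?x - 1))"
    using c_sq by (intro mult_left_mono) auto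
  then have "exp (- (?a * ?c)) - ?X \<le> ?a * (?\<rho> - 1) * ?c + ?a\<^sup>2 * (?D + ?c / (?x - 1))"
    using exp_neg_le_quadratic[of "?a * ?c"] one_minus_weight_ratio_le_pairs a c
    by (simp add: algebra_simps power_mult_distrib)
  moreover have "?a\<^sup>2 * ?\<rho> * ?c\<^sup>2 \<le> ?a\<^sup>2 * ?\<rho> * (?D + ?c / (?x - 1))"
    using c_sq \<rho> by (intro mult_left_mono) auto
  then have "?X - exp (- (?a * ?c)) \<le> ?a * ?c / ?x + ?a\<^sup>2 * ?\<rho> * (?D + ?c / (?x - 1))
      + ?a * real n ^ 2 * ?\<rho> * (?D + 2 * ?c / ?x)"
    using exp_ge_add_one_self[of "- (?a * ?c)"] one_minus_weight_ratio_ge by linarith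
  moreover have "pair_error N n * ?c + triple_error N n * ?D
      = ?a * (?\<rho> - 1) * ?c + ?a * ?c / ?x + 2 * ?a * real n ^ 2 * ?\<rho> * ?c / ?x
        + ?a\<^sup>2 * ?\<rho> * (?c / (?x - 1)) + ?a\<^sup>2 * (?c / (?x - 1))
        + ?a\<^sup>2 * ?\<rho> * ?D + ?a * real n ^ 2 * ?\<rho> * ?D + ?a\<^sup>2 * ?D"
    by (simp add: pair_error_def triple_error_def algebra_simps add_divide_distrib)
  moreover have "0 \<le> ?a * (?\<rho> - 1) * ?c" "0 \<le> ?a\<^sup>2 * (?c / (?x - 1))" "0 \<le> ?a\<^sup>2 * ?D"
    "0 \<le> ?a * ?c / ?x" "0 \<le> 2 * ?a * real n ^ 2 * ?\<rho> * ?c / ?x" "0 \<le> ?a\<^sup>2 * ?\<rho> * (?c / (?x - 1))"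
    "0 \<le> ?a\<^sup>2 * ?\<rho> * ?D" "0 \<le> ?a * real n ^ 2 * ?\<rho> * ?D"
    using a c D \<rho> x by simp_all
  ultimately show ?thesis
    by (simp add: abs_le_iff algebra_simps)
qed

end

section \<open>The product along the time change\<close>

lemma abs_exp_neg_diff_le:
  fixes a s t :: real
  assumes "0 \<le> a" "0 \<le> t" "t \<le> s"
  shows "\<bar>exp (- (a * s)) - exp (- (a * t))\<bar> \<le> a * (s - t)"
proof -
  have "exp (- (a * s)) \<le> exp (- (a * t))"
    using assms by (simp add: mult_left_mono)
  moreover have "exp (- (a * s)) = exp (- (a * t)) * exp (- (a * (s - t)))"
    by (simp add: algebra_simps flip: exp_add)
  moreover have "exp (- (a * t)) * (1 - exp (- (a * (s - t)))) \<le> 1 * (a * (s - t))"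
    using assms exp_ge_add_one_self[of "- (a * (s - t))"] by (intro mult_mono) auto
  ultimately show ?thesis
    by (simp add: right_diff_distrib)
qed

lemma le_add_sq_div:
  fixes c \<eta> :: real
  assumes "0 \<le> c" "0 < \<eta>"
  shows "c \<le> \<eta> + c\<^sup>2 / \<eta>"
proof -
  have "0 \<le> (c - \<eta>)\<^sup>2" "0 \<le> \<eta> * c"
    using assms by simp_all
  then have "c * \<eta> \<le> \<eta> * \<eta> + c\<^sup>2"
    by (simp add: power2_eq_square algebra_simps)
  then show ?thesis
    using assms by (simp add: field_simps power2_eq_square)
qed

lemma prod_exp_error_le:
  fixes X c D :: "nat \<Rightarrow> real" and \<tau> :: nat and a t \<eta> E K w :: real
  assumes a: "0 \<le> a" and t: "0 < t" and \<eta>: "0 < \<eta>" and E: "0 \<le> E"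
    and X_bounds: "\<And>r. r \<in> {1..\<tau>} \<Longrightarrow> 0 \<le> X r \<and> X r \<le> 1"
    and c_bounds: "\<And>r. r \<in> {1..\<tau>} \<Longrightarrow> 0 \<le> c r \<and> c r \<le> 1"
    and D_nonneg: "\<And>r. r \<in> {1..\<tau>} \<Longrightarrow> 0 \<le> D r"
    and c_sq: "\<And>r. r \<in> {1..\<tau>} \<Longrightarrow> (c r)\<^sup>2 \<le> D r + w"
    and X_err: "\<And>r. r \<in> {1..\<tau>} \<Longrightarrow> \<bar>X r - exp (- (a * c r))\<bar> \<le> E * c r + K * D r"
    and reached: "t \<le> (\<Sum>r\<in>{1..\<tau>}. c r)" and not_reached: "(\<Sum>r\<in>{1..\<tau> - 1}. c r) < t"
  shows "\<bar>(\<Prod>r\<in>{1..\<tau>}. X r) - exp (- (a * t))\<bar>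
     \<le> E * (t + 1) + K * (\<Sum>r\<in>{1..\<tau>}. D r) + a * \<eta> + a * (((\<Sum>r\<in>{1..\<tau>}. D r) + w) / \<eta>)"
proof -
  define s where "s = (\<Sum>r\<in>{1..\<tau>}. c r)"
  define SD where "SD = (\<Sum>r\<in>{1..\<tau>}. D r)"
  have \<tau>: "\<tau> \<in> {1..\<tau>}"
    using reached t by (cases \<tau>) auto
  have split: "{1..\<tau>} = insert \<tau> {1..\<tau> - 1}"
    using \<tau> by auto
  have s_eq: "s = (\<Sum>r\<in>{1..\<tau> - 1}. c r) + c \<tau>"
    unfolding s_def split using \<tau> by (subst sum.insert) auto
  have overshoot: "s - t \<le> c \<tau>" and s_le: "s \<le> t + 1"
    using s_eq not_reached c_bounds[OF \<tau>] by linarith+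
  have "exp (- (a * s)) = (\<Prod>r\<in>{1..\<tau>}. exp (- (a * c r)))"
    unfolding s_def sum_distrib_left sum_negf[symmetric] by (rule exp_sum) simp
  then have "\<bar>(\<Prod>r\<in>{1..\<tau>}. X r) - exp (- (a * s))\<bar> \<le> (\<Sum>r\<in>{1..\<tau>}. \<bar>X r - exp (- (a * c r))\<bar>)"
    using norm_prod_diff[of "{1..\<tau>}" X "\<lambda>r. exp (- (a * c r))"] X_bounds c_bounds a
    by (simp add: mult_nonneg_nonneg)
  also have "\<dots> \<le> (\<Sum>r\<in>{1..\<tau>}. E * c r + K * D r)"
    using X_err by (intro sum_mono) auto
  also have "\<dots> = E * s + K * SD"
    unfolding s_def SD_def by (simp add: sum.distrib sum_distrib_left)
  also have "\<dots> \<le> E * (t + 1) + K * SD"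
    using s_le E by (simp add: mult_left_mono)
  finally have product_error: "\<bar>(\<Prod>r\<in>{1..\<tau>}. X r) - exp (- (a * s))\<bar> \<le> E * (t + 1) + K * SD" .
  have "(c \<tau>)\<^sup>2 \<le> SD + w"
    using c_sq[OF \<tau>] member_le_sum[OF \<tau>, of D] D_nonneg unfolding SD_def by fastforce
  then have "c \<tau> \<le> \<eta> + (SD + w) / \<eta>"
    using le_add_sq_div[OF _ \<eta>, of "c \<tau>"] c_bounds[OF \<tau>] \<eta> by (smt (verit) divide_right_mono)
  then have "\<bar>exp (- (a * s)) - exp (- (a * t))\<bar> \<le> a * \<eta> + a * ((SD + w) / \<eta>)"
    using abs_exp_neg_diff_le[of a t s] a t reached overshoot mult_left_mono[of "s - t" _ a]
    unfolding s_def by (smt (verit) distrib_left)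
  then show ?thesis
    using product_error unfolding SD_def[symmetric] by linarith
qed

section \<open>The offspring process\<close>

definition error_bound :: "nat \<Rightarrow> nat \<Rightarrow> real \<Rightarrow> real \<Rightarrow> real \<Rightarrow> real" where
  "error_bound N n t \<eta> s = pair_error N n * (t + 1) + npairs n * \<eta>
     + npairs n * (inverse (real N - 1) * inverse \<eta>) + (triple_error N n + npairs n * inverse \<eta>) * s"

lemma error_bound_mono:
  "n < N \<Longrightarrow> 0 < \<eta> \<Longrightarrow> s \<le> s' \<Longrightarrow> error_bound N n t \<eta> s \<le> error_bound N n t \<eta> s'"
  unfolding error_bound_def using triple_error_nonneg[of n N] npairs_nonneg[of n]
  by (intro add_left_mono mult_left_mono) auto

lemma error_bound_nonneg:
  assumes "n < N" "2 \<le> N" "0 \<le> t" "0 < \<eta>" "0 \<le> s"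
  shows "0 \<le> error_bound N n t \<eta> s"
  unfolding error_bound_def using assms pair_error_nonneg triple_error_nonneg npairs_nonneg[of n]
  by (intro add_nonneg_nonneg mult_nonneg_nonneg) auto

locale offspring_process = prob_space M for M :: "'a measure" +
  fixes N :: nat and \<nu> :: "nat \<Rightarrow> nat \<Rightarrow> 'a \<Rightarrow> nat"
  assumes measurable_offspring: "\<And>s i. 1 \<le> s \<Longrightarrow> i < N \<Longrightarrow> \<nu> s i \<in> M \<rightarrow>\<^sub>M count_space UNIV"
    and offspring_total: "\<And>s \<omega>. 1 \<le> s \<Longrightarrow> \<omega> \<in> space M \<Longrightarrow> (\<Sum>i<N. \<nu> s i \<omega>) = N"
begin

text \<open>\<open>rate 2 r\<close> is \<open>c\<^sub>N(r)\<close> and \<open>rate 3 r\<close> is \<open>D\<^sub>r\<close>; \<open>cond_rate k r\<close> is their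
  \<open>\<F>\<^sub>r\<^sub>-\<^sub>1\<close>-conditional version, as in the moment hypothesis.\<close>
definition rate :: "nat \<Rightarrow> nat \<Rightarrow> 'a \<Rightarrow> real" where
  "rate k r \<omega> = frate k (\<lambda>i. \<nu> r i \<omega>) N"

definition cond_rate :: "nat \<Rightarrow> nat \<Rightarrow> 'a \<Rightarrow> real" where
  "cond_rate k r \<omega> = (\<Sum>i<N. real_cond_exp M (filt M N \<nu> (r - 1))
      (\<lambda>x. ffac k (real (\<nu> r i x))) \<omega>) / ffac k (real N)"

definition timescale :: "nat \<Rightarrow> 'a \<Rightarrow> real" where
  "timescale s \<omega> = (\<Sum>r\<in>{1..s}. rate 2 r \<omega>)"

definition before_tau :: "real \<Rightarrow> nat \<Rightarrow> 'a set" where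
  "before_tau t r = {\<omega> \<in> space M. timescale (r - 1) \<omega> < t}"

lemma cN_eq_rate: "cN N \<nu> r \<omega> = rate 2 r \<omega>"
  unfolding cN_def rate_def frate_def fmoment_def ..

lemma tauN_eq_Least: "tauN N \<nu> t \<omega> = (LEAST s. t \<le> timescale s \<omega>)"
  unfolding tauN_def timescale_def cN_eq_rate ..

lemma rate_eq_sum: "rate k r \<omega> = (\<Sum>i<N. ffac k (real (\<nu> r i \<omega>))) / ffac k (real N)"
  unfolding rate_def frate_def fmoment_def ..

lemma sets_filt:
  "sets (filt M N \<nu> t) = sigma_sets (space M) {\<nu> s i -` A \<inter> space M | s i A. 1 \<le> s \<and> s \<le> t \<and> i < N}"
  unfolding filt_def by (rule sets_measure_of) auto

lemma space_filt: "space (filt M N \<nu> t) = space M"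
  unfolding filt_def by (rule space_measure_of) auto

lemma subalgebra_filt: "subalgebra M (filt M N \<nu> t)"
proof -
  have "{\<nu> s i -` A \<inter> space M | s i A. 1 \<le> s \<and> s \<le> t \<and> i < N} \<subseteq> sets M"
    by (auto intro: measurable_sets[OF measurable_offspring])
  then show ?thesis
    unfolding subalgebra_def space_filt sets_filt by (simp add: sets.sigma_sets_subset)
qed

lemma sets_filt_subset: "A \<in> sets (filt M N \<nu> t) \<Longrightarrow> A \<in> sets M"
  using subalgebra_filt unfolding subalgebra_def by blast

lemma sigma_finite_subalgebra_filt: "sigma_finite_subalgebra M (filt M N \<nu> t)"
  by (intro finite_measure_subalgebra_is_sigma_finite finite_measure_subalgebra.intro
      finite_measure_axioms) (simp add: finite_measure_subalgebra_axioms_def subalgebra_filt)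

lemma measurable_offspring_filt:
  "1 \<le> s \<Longrightarrow> s \<le> t \<Longrightarrow> i < N \<Longrightarrow> \<nu> s i \<in> filt M N \<nu> t \<rightarrow>\<^sub>M count_space UNIV"
  by (rule measurableI) (auto simp: space_filt sets_filt intro: sigma_sets.Basic)

lemma offspring_fun_measurable_filt:
  "1 \<le> s \<Longrightarrow> s \<le> t \<Longrightarrow> i < N \<Longrightarrow> (\<lambda>\<omega>. f (\<nu> s i \<omega>) :: real) \<in> borel_measurable (filt M N \<nu> t)"
  using measurable_compose[OF measurable_offspring_filt, of s t i f borel] by (simp add: comp_def)

lemma offspring_fun_measurable:
  "1 \<le> s \<Longrightarrow> i < N \<Longrightarrow> (\<lambda>\<omega>. f (\<nu> s i \<omega>) :: real) \<in> borel_measurable M"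
  using measurable_compose[OF measurable_offspring, of s i f borel] by (simp add: comp_def)

lemma rate_measurable_filt: "1 \<le> s \<Longrightarrow> s \<le> t \<Longrightarrow> rate k s \<in> borel_measurable (filt M N \<nu> t)"
  unfolding rate_eq_sum[abs_def]
  by (intro borel_measurable_divide borel_measurable_sum
      offspring_fun_measurable_filt[where f = "\<lambda>m. ffac k (real m)"]) auto

lemma rate_measurable: "1 \<le> s \<Longrightarrow> rate k s \<in> borel_measurable M"
  unfolding rate_eq_sum[abs_def]
  by (intro borel_measurable_divide borel_measurable_sum
      offspring_fun_measurable[where f = "\<lambda>m. ffac k (real m)"]) auto

lemma timescale_measurable_filt: "timescale s \<in> borel_measurable (filt M N \<nu> s)"
  unfolding timescale_def[abs_def] by (intro borel_measurable_sum rate_measurable_filt) auto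

lemma timescale_measurable: "timescale s \<in> borel_measurable M"
  unfolding timescale_def[abs_def] by (intro borel_measurable_sum rate_measurable) auto

lemma before_tau_in_filt: "before_tau t r \<in> sets (filt M N \<nu> (r - 1))"
proof -
  have "before_tau t r = timescale (r - 1) -` {..<t} \<inter> space (filt M N \<nu> (r - 1))"
    unfolding before_tau_def space_filt by auto
  then show ?thesis
    using measurable_sets[OF timescale_measurable_filt] by simp
qed

lemma integrable_indicator_ffac:
  assumes "1 \<le> r" "i < N" "A \<in> sets M"
  shows "integrable M (\<lambda>\<omega>. indicator A \<omega> * ffac k (real (\<nu> r i \<omega>)))"
proof (rule integrable_const_bound[where B = "real N ^ k"])
  have "\<bar>ffac k (real (\<nu> r i \<omega>))\<bar> \<le> real N ^ k" if "\<omega> \<in> space M" for \<omega>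
  proof -
    have "\<nu> r i \<omega> \<le> N"
      using member_le_sum[of i "{..<N}" "\<lambda>i. \<nu> r i \<omega>"] offspring_total[OF assms(1) that] assms(2)
      by simp
    then show ?thesis
      using ffac_of_nat_le_power[of k "\<nu> r i \<omega>"] ffac_of_nat_nonneg[of k "\<nu> r i \<omega>"]
        power_mono[of "real (\<nu> r i \<omega>)" "real N" k]
      by simp
  qed
  then show "AE \<omega> in M. norm (indicator A \<omega> * ffac k (real (\<nu> r i \<omega>))) \<le> real N ^ k"
    by (intro AE_I2) (auto simp: indicator_def)
  show "(\<lambda>\<omega>. indicator A \<omega> * ffac k (real (\<nu> r i \<omega>))) \<in> borel_measurable M"
    using assms by (intro borel_measurable_times borel_measurable_indicator
        offspring_fun_measurable) auto
qed

lemma indicator_times_rate: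
  "indicator A \<omega> * rate k r \<omega> = (\<Sum>i<N. indicator A \<omega> * ffac k (real (\<nu> r i \<omega>))) / ffac k (real N)"
  unfolding rate_eq_sum by (simp add: sum_distrib_left)

lemma integrable_indicator_rate:
  "1 \<le> r \<Longrightarrow> A \<in> sets M \<Longrightarrow> integrable M (\<lambda>\<omega>. indicator A \<omega> * rate k r \<omega>)"
  unfolding indicator_times_rate
  by (intro integrable_divide_zero Bochner_Integration.integrable_sum integrable_indicator_ffac) auto

lemma integral_indicator_cond_rate:
  assumes r: "1 \<le> r" and A: "A \<in> sets (filt M N \<nu> (r - 1))"
  shows "integrable M (\<lambda>\<omega>. indicator A \<omega> * cond_rate k r \<omega>)"
    and "(\<integral>\<omega>. indicator A \<omega> * cond_rate k r \<omega> \<partial>M) = (\<integral>\<omega>. indicator A \<omega> * rate k r \<omega> \<partial>M)"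
proof -
  interpret F: sigma_finite_subalgebra M "filt M N \<nu> (r - 1)"
    by (rule sigma_finite_subalgebra_filt)
  let ?g = "\<lambda>i \<omega>. ffac k (real (\<nu> r i \<omega>))"
  let ?e = "\<lambda>i. real_cond_exp M (filt M N \<nu> (r - 1)) (?g i)"
  have A_M: "A \<in> sets M"
    using A by (rule sets_filt_subset)
  have g: "integrable M (\<lambda>\<omega>. indicator A \<omega> * ?g i \<omega>)" "?g i \<in> borel_measurable M" if "i < N" for i
    using integrable_indicator_ffac[OF r that A_M] offspring_fun_measurable[OF r that] by auto
  have ind: "indicator A \<in> borel_measurable (filt M N \<nu> (r - 1))"
    using A by simp
  have e: "integrable M (\<lambda>\<omega>. indicator A \<omega> * ?e i \<omega>)"
    "(\<integral>\<omega>. indicator A \<omega> * ?e i \<omega> \<partial>M) = (\<integral>\<omega>. indicator A \<omega> * ?g i \<omega> \<partial>M)" if "i < N" for i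
    using F.real_cond_exp_intg[OF g(1)[OF that] ind g(2)[OF that]] by auto
  have cond_eq: "indicator A \<omega> * cond_rate k r \<omega> = (\<Sum>i<N. indicator A \<omega> * ?e i \<omega>) / ffac k (real N)" for \<omega>
    unfolding cond_rate_def by (simp add: sum_distrib_left)
  show "integrable M (\<lambda>\<omega>. indicator A \<omega> * cond_rate k r \<omega>)"
    unfolding cond_eq by (intro integrable_divide_zero Bochner_Integration.integrable_sum e) auto
  have "(\<integral>\<omega>. (\<Sum>i<N. indicator A \<omega> * ?e i \<omega>) \<partial>M) = (\<Sum>i<N. \<integral>\<omega>. indicator A \<omega> * ?e i \<omega> \<partial>M)"
    by (intro Bochner_Integration.integral_sum e(1)) auto
  also have "\<dots> = (\<Sum>i<N. \<integral>\<omega>. indicator A \<omega> * ?g i \<omega> \<partial>M)"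
    by (intro sum.cong refl e(2)) auto
  also have "\<dots> = (\<integral>\<omega>. (\<Sum>i<N. indicator A \<omega> * ?g i \<omega>) \<partial>M)"
    by (intro Bochner_Integration.integral_sum[symmetric] g(1)) auto
  finally show "(\<integral>\<omega>. indicator A \<omega> * cond_rate k r \<omega> \<partial>M) = (\<integral>\<omega>. indicator A \<omega> * rate k r \<omega> \<partial>M)"
    unfolding cond_eq indicator_times_rate integral_divide_zero by simp
qed

lemma integral_indicator_rate_3_le:
  assumes moment: "AE \<omega> in M. \<forall>s\<ge>1. cond_rate 3 s \<omega> \<le> b * cond_rate 2 s \<omega>"
    and r: "1 \<le> r" and A: "A \<in> sets (filt M N \<nu> (r - 1))"
  shows "(\<integral>\<omega>. indicator A \<omega> * rate 3 r \<omega> \<partial>M) \<le> b * (\<integral>\<omega>. indicator A \<omega> * rate 2 r \<omega> \<partial>M)"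
proof -
  have "(\<integral>\<omega>. indicator A \<omega> * rate 3 r \<omega> \<partial>M) = (\<integral>\<omega>. indicator A \<omega> * cond_rate 3 r \<omega> \<partial>M)"
    using integral_indicator_cond_rate(2)[OF r A] by simp
  also have "\<dots> \<le> (\<integral>\<omega>. b * (indicator A \<omega> * cond_rate 2 r \<omega>) \<partial>M)"
  proof (rule integral_mono_AE)
    show "AE \<omega> in M. indicator A \<omega> * cond_rate 3 r \<omega> \<le> b * (indicator A \<omega> * cond_rate 2 r \<omega>)"
      using moment
    proof eventually_elim
      case (elim \<omega>)
      then show ?case using r by (auto simp: indicator_def)
    qed
  qed (use integral_indicator_cond_rate(1)[OF r A] in auto)
  also have "\<dots> = b * (\<integral>\<omega>. indicator A \<omega> * rate 2 r \<omega> \<partial>M)"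
    using integral_indicator_cond_rate(2)[OF r A] by simp
  finally show ?thesis .
qed

definition no_merger_prob :: "nat \<Rightarrow> real \<Rightarrow> 'a \<Rightarrow> real" where
  "no_merger_prob n t \<omega> = (\<Prod>r\<in>{1..tauN N \<nu> t \<omega>}. (1 - pr n N \<nu> r \<omega>))"

lemma rate_nonneg: "0 \<le> rate k r \<omega>"
  unfolding rate_def by (rule frate_nonneg)

lemma rate_2_le_1: "3 \<le> N \<Longrightarrow> 1 \<le> r \<Longrightarrow> \<omega> \<in> space M \<Longrightarrow> rate 2 r \<omega> \<le> 1"
  unfolding rate_def by (intro frate_2_le_1 offspring_total)

lemma timescale_mono: "j \<le> k \<Longrightarrow> timescale j \<omega> \<le> timescale k \<omega>"
  unfolding timescale_def by (intro sum_mono2 rate_nonneg) auto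

lemma timescale_Suc: "timescale (Suc k) \<omega> = timescale k \<omega> + rate 2 (Suc k) \<omega>"
  unfolding timescale_def by simp

lemma mem_before_tau_iff: "\<omega> \<in> before_tau t r \<longleftrightarrow> \<omega> \<in> space M \<and> timescale (r - 1) \<omega> < t"
  unfolding before_tau_def by simp

lemma tauN_measurable: "(\<lambda>\<omega>. tauN N \<nu> t \<omega>) \<in> M \<rightarrow>\<^sub>M count_space UNIV"
proof -
  have [measurable]: "timescale k \<in> borel_measurable M" for k
    by (rule timescale_measurable)
  show ?thesis
    unfolding tauN_eq_Least by measurable
qed

lemma tauN_gt_in_sets: "{\<omega> \<in> space M. K < tauN N \<nu> t \<omega>} \<in> sets M"
  using measurable_sets[OF tauN_measurable, of "{k. K < k}"] by (simp add: vimage_def Int_def conj_commute)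

lemma tauN_props:
  assumes t: "0 < t" and reached: "\<exists>s. t \<le> timescale s \<omega>"
  shows "1 \<le> tauN N \<nu> t \<omega>" "t \<le> timescale (tauN N \<nu> t \<omega>) \<omega>"
    "timescale (tauN N \<nu> t \<omega> - 1) \<omega> < t"
    and "\<And>r. 1 \<le> r \<Longrightarrow> \<omega> \<in> space M \<Longrightarrow> \<omega> \<in> before_tau t r \<longleftrightarrow> r \<le> tauN N \<nu> t \<omega>"
proof -
  let ?\<tau> = "tauN N \<nu> t \<omega>"
  show ge: "t \<le> timescale ?\<tau> \<omega>"
    unfolding tauN_eq_Least using reached by (rule LeastI_ex)
  have lt: "timescale k \<omega> < t" if "k < ?\<tau>" for k
    using not_less_Least[OF that[unfolded tauN_eq_Least]] by simp
  show \<tau>: "1 \<le> ?\<tau>"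
    using ge t by (cases ?\<tau>) (auto simp: timescale_def)
  show "timescale (?\<tau> - 1) \<omega> < t"
    using lt \<tau> by simp
  fix r :: nat assume r: "1 \<le> r" and \<omega>: "\<omega> \<in> space M"
  have "r \<le> ?\<tau> \<longleftrightarrow> timescale (r - 1) \<omega> < t"
  proof
    assume "r \<le> ?\<tau>"
    then show "timescale (r - 1) \<omega> < t"
      using lt[of "r - 1"] r by simp
  next
    assume "timescale (r - 1) \<omega> < t"
    then show "r \<le> ?\<tau>"
      using ge timescale_mono[of ?\<tau> "r - 1" \<omega>] by (cases "?\<tau> \<le> r - 1") auto
  qed
  then show "\<omega> \<in> before_tau t r \<longleftrightarrow> r \<le> ?\<tau>"
    using \<omega> by (simp add: mem_before_tau_iff)
qed

lemma stopped_rate_2_sum_le: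
  assumes "0 \<le> t" "3 \<le> N" "\<omega> \<in> space M"
  shows "(\<Sum>r\<in>{1..K}. indicator (before_tau t r) \<omega> * rate 2 r \<omega>) \<le> t + 1"
proof -
  have "(\<Sum>r\<in>{1..K}. indicator (before_tau t r) \<omega> * rate 2 r \<omega>) \<le> min (timescale K \<omega>) (t + 1)"
  proof (induction K)
    case 0
    then show ?case using assms by (simp add: timescale_def)
  next
    case (Suc K)
    let ?G = "\<Sum>r\<in>{1..K}. indicator (before_tau t r) \<omega> * rate 2 r \<omega>"
    have eq: "(\<Sum>r\<in>{1..Suc K}. indicator (before_tau t r) \<omega> * rate 2 r \<omega>)
        = ?G + indicator (before_tau t (Suc K)) \<omega> * rate 2 (Suc K) \<omega>"
      by (simp add: sum.cl_ivl_Suc)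
    have "0 \<le> rate 2 (Suc K) \<omega>" "rate 2 (Suc K) \<omega> \<le> 1"
      using rate_nonneg rate_2_le_1[OF assms(2) _ assms(3)] by auto
    moreover have "indicator (before_tau t (Suc K)) \<omega> = (if timescale K \<omega> < t then 1 else 0 :: real)"
      using assms(3) by (simp add: mem_before_tau_iff)
    ultimately show ?case
      unfolding eq timescale_Suc using Suc.IH by auto
  qed
  then show ?thesis by simp
qed

lemma expected_stopped_rate_3_sum_le:
  assumes moment: "AE \<omega> in M. \<forall>s\<ge>1. cond_rate 3 s \<omega> \<le> b * cond_rate 2 s \<omega>"
    and "0 \<le> t" "3 \<le> N"
  shows "(\<integral>\<omega>. (\<Sum>r\<in>{1..K}. indicator (before_tau t r) \<omega> * rate 3 r \<omega>) \<partial>M) \<le> \<bar>b\<bar> * (t + 1)"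
proof -
  have integrable: "integrable M (\<lambda>\<omega>. indicator (before_tau t r) \<omega> * rate k r \<omega>)" if "1 \<le> r" for k r
    using that by (intro integrable_indicator_rate sets_filt_subset[OF before_tau_in_filt])
  let ?I = "\<integral>\<omega>. (\<Sum>r\<in>{1..K}. indicator (before_tau t r) \<omega> * rate 2 r \<omega>) \<partial>M"
  have "(\<integral>\<omega>. (\<Sum>r\<in>{1..K}. indicator (before_tau t r) \<omega> * rate 3 r \<omega>) \<partial>M)
      = (\<Sum>r\<in>{1..K}. \<integral>\<omega>. indicator (before_tau t r) \<omega> * rate 3 r \<omega> \<partial>M)"
    using integrable by (intro Bochner_Integration.integral_sum) auto
  also have "\<dots> \<le> (\<Sum>r\<in>{1..K}. b * (\<integral>\<omega>. indicator (before_tau t r) \<omega> * rate 2 r \<omega> \<partial>M))"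
    by (intro sum_mono integral_indicator_rate_3_le[OF moment] before_tau_in_filt) auto
  also have "\<dots> = b * ?I"
    by (subst Bochner_Integration.integral_sum) (auto intro: integrable simp: sum_distrib_left)
  also have "\<dots> \<le> \<bar>b\<bar> * (t + 1)"
  proof -
    have "0 \<le> ?I"
      by (intro integral_nonneg_AE AE_I2 sum_nonneg mult_nonneg_nonneg rate_nonneg) auto
    moreover have "?I \<le> (\<integral>\<omega>. t + 1 \<partial>M)"
      using integrable stopped_rate_2_sum_le[OF assms(2,3)]
      by (intro integral_mono_AE AE_I2 Bochner_Integration.integrable_sum) auto
    ultimately show ?thesis
      using prob_space by (simp add: abs_mult_pos' mult_mono abs_le_iff mult_le_cancel_right)
  qed
  finally show ?thesis .
qed

lemma one_minus_pr_eq: "1 - pr n N \<nu> r \<omega> = weight_sum (\<lambda>i. \<nu> r i \<omega>) N n / ffac n (real N)"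
  unfolding pr_def weight_sum_def distinct_tuples_def tuple_weight_def by simp

lemma pr_measurable: "1 \<le> r \<Longrightarrow> (\<lambda>\<omega>. 1 - pr n N \<nu> r \<omega>) \<in> borel_measurable M"
  unfolding pr_def
  by (intro borel_measurable_diff borel_measurable_const borel_measurable_divide
      borel_measurable_sum borel_measurable_prod offspring_fun_measurable[where f = real])
     (auto simp: PiE_iff)

lemma no_merger_prob_measurable: "no_merger_prob n t \<in> borel_measurable M"
proof -
  have "(\<lambda>\<omega>. (\<lambda>k \<omega>. \<Prod>r\<in>{1..k}. (1 - pr n N \<nu> r \<omega>)) (tauN N \<nu> t \<omega>) \<omega>) \<in> borel_measurable M"
    by (rule measurable_compose_countable[OF _ tauN_measurable])
       (intro borel_measurable_prod pr_measurable, auto)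
  then show ?thesis
    unfolding no_merger_prob_def[abs_def] by simp
qed

context
  fixes n :: nat
  assumes n_less: "n < N" and N_ge_3: "3 \<le> N"
begin

lemma one_minus_pr_bounds:
  assumes "1 \<le> r" "\<omega> \<in> space M"
  shows "0 \<le> 1 - pr n N \<nu> r \<omega> \<and> 1 - pr n N \<nu> r \<omega> \<le> 1"
  using weight_ratio_bounds[OF offspring_total[OF assms] n_less N_ge_3]
  unfolding one_minus_pr_eq by simp

lemma no_merger_prob_bounds: "\<omega> \<in> space M \<Longrightarrow> 0 \<le> no_merger_prob n t \<omega> \<and> no_merger_prob n t \<omega> \<le> 1"
  unfolding no_merger_prob_def using one_minus_pr_bounds by (auto intro!: prod_nonneg prod_le_1)

lemma sum_before_tau_eq:
  fixes f :: "nat \<Rightarrow> real"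
  assumes "0 < t" "\<exists>s. t \<le> timescale s \<omega>" "\<omega> \<in> space M" "tauN N \<nu> t \<omega> \<le> K"
  shows "(\<Sum>r\<in>{1..K}. indicator (before_tau t r) \<omega> * f r) = (\<Sum>r\<in>{1..tauN N \<nu> t \<omega>}. f r)"
proof -
  have "(\<Sum>r\<in>{1..K}. indicator (before_tau t r) \<omega> * f r) = (\<Sum>r\<in>{1..K}. if r \<le> tauN N \<nu> t \<omega> then f r else 0)"
    using tauN_props(4)[OF assms(1,2) _ assms(3)] by (intro sum.cong) auto
  also have "\<dots> = (\<Sum>r\<in>{r\<in>{1..K}. r \<le> tauN N \<nu> t \<omega>}. f r)"
    by (rule sum.inter_filter[symmetric]) simp
  also have "{r\<in>{1..K}. r \<le> tauN N \<nu> t \<omega>} = {1..tauN N \<nu> t \<omega>}"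
    using assms(4) by auto
  finally show ?thesis .
qed

lemma no_merger_prob_error_le:
  assumes t: "0 < t" and \<eta>: "0 < \<eta>" and \<omega>: "\<omega> \<in> space M"
    and reached: "\<exists>s. t \<le> timescale s \<omega>"
  shows "\<bar>no_merger_prob n t \<omega> - exp (- (npairs n * t))\<bar>
    \<le> error_bound N n t \<eta> (\<Sum>r\<in>{1..tauN N \<nu> t \<omega>}. rate 3 r \<omega>)"
proof -
  let ?SD = "\<Sum>r\<in>{1..tauN N \<nu> t \<omega>}. rate 3 r \<omega>"
  have "\<bar>no_merger_prob n t \<omega> - exp (- (npairs n * t))\<bar>
      \<le> pair_error N n * (t + 1) + triple_error N n * ?SD + npairs n * \<eta>
        + npairs n * ((?SD + inverse (real N - 1)) / \<eta>)"
    unfolding no_merger_prob_def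
  proof (rule prod_exp_error_le[where c = "\<lambda>r. rate 2 r \<omega>" and D = "\<lambda>r. rate 3 r \<omega>"])
    fix r assume r: "r \<in> {1..tauN N \<nu> t \<omega>}"
    then have total: "(\<Sum>i<N. \<nu> r i \<omega>) = N"
      using offspring_total \<omega> by simp
    show "0 \<le> 1 - pr n N \<nu> r \<omega> \<and> 1 - pr n N \<nu> r \<omega> \<le> 1"
      using one_minus_pr_bounds r \<omega> by simp
    show "0 \<le> rate 2 r \<omega> \<and> rate 2 r \<omega> \<le> 1"
      using rate_nonneg rate_2_le_1[OF N_ge_3 _ \<omega>] r by simp
    show "0 \<le> rate 3 r \<omega>"
      by (rule rate_nonneg)
    have "rate 2 r \<omega> / (real N - 1) \<le> inverse (real N - 1)"
      using rate_2_le_1[OF N_ge_3 _ \<omega>, of r] r N_ge_3 by (simp add: divide_inverse)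
    then show "(rate 2 r \<omega>)\<^sup>2 \<le> rate 3 r \<omega> + inverse (real N - 1)"
      using frate_2_sq_le[OF total N_ge_3] unfolding rate_def by simp
    show "\<bar>1 - pr n N \<nu> r \<omega> - exp (- (npairs n * rate 2 r \<omega>))\<bar>
        \<le> pair_error N n * rate 2 r \<omega> + triple_error N n * rate 3 r \<omega>"
      unfolding one_minus_pr_eq rate_def by (rule weight_ratio_exp_error[OF total n_less N_ge_3])
  next
    show "t \<le> (\<Sum>r\<in>{1..tauN N \<nu> t \<omega>}. rate 2 r \<omega>)"
      using tauN_props(2)[OF t reached] by (simp add: timescale_def)
    show "(\<Sum>r\<in>{1..tauN N \<nu> t \<omega> - 1}. rate 2 r \<omega>) < t"
      using tauN_props(3)[OF t reached] by (simp add: timescale_def)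
  qed (use t \<eta> npairs_nonneg pair_error_nonneg[OF n_less] N_ge_3 in simp_all)
  also have "\<dots> = error_bound N n t \<eta> ?SD"
    by (simp add: error_bound_def add_divide_distrib divide_inverse algebra_simps)
  finally show ?thesis .
qed

text \<open>Truncating at \<open>K\<close> keeps the error term integrable; the event \<open>K < \<tau>\<close> is paid for separately.\<close>
lemma no_merger_prob_error_le_truncated:
  assumes t: "0 < t" and \<eta>: "0 < \<eta>" and reached: "AE \<omega> in M. \<exists>s. t \<le> timescale s \<omega>"
  shows "AE \<omega> in M. \<bar>no_merger_prob n t \<omega> - exp (- (npairs n * t))\<bar>
    \<le> error_bound N n t \<eta> (\<Sum>r\<in>{1..K}. indicator (before_tau t r) \<omega> * rate 3 r \<omega>)
      + indicator {\<omega> \<in> space M. K < tauN N \<nu> t \<omega>} \<omega>"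
  using reached AE_space
proof eventually_elim
  case (elim \<omega>)
  let ?\<sigma> = "\<Sum>r\<in>{1..K}. indicator (before_tau t r) \<omega> * rate 3 r \<omega>"
  show ?case
  proof (cases "tauN N \<nu> t \<omega> \<le> K")
    case True
    have "0 \<le> (indicator {\<omega> \<in> space M. K < tauN N \<nu> t \<omega>} \<omega> :: real)"
      by simp
    then show ?thesis
      unfolding sum_before_tau_eq[OF t elim(1,2) True]
      using no_merger_prob_error_le[OF t \<eta> elim(2,1)] by linarith
  next
    case False
    then have "indicator {\<omega> \<in> space M. K < tauN N \<nu> t \<omega>} \<omega> = (1::real)"
      using elim(2) by simp
    moreover have "0 \<le> error_bound N n t \<eta> ?\<sigma>"
      using t \<eta> N_ge_3 by (intro error_bound_nonneg n_less sum_nonneg mult_nonneg_nonneg rate_nonneg) auto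
    moreover have "exp (- (npairs n * t)) \<le> 1"
      using npairs_nonneg[of n] t by simp
    then have "\<bar>no_merger_prob n t \<omega> - exp (- (npairs n * t))\<bar> \<le> 1"
      using no_merger_prob_bounds[OF elim(2), of t] exp_gt_zero[of "- (npairs n * t)"]
      unfolding abs_le_iff by linarith
    ultimately show ?thesis
      by linarith
  qed
qed

lemma integral_no_merger_prob_error_le_truncated:
  assumes moment: "AE \<omega> in M. \<forall>s\<ge>1. cond_rate 3 s \<omega> \<le> b * cond_rate 2 s \<omega>"
    and t: "0 < t" and \<eta>: "0 < \<eta>" and reached: "AE \<omega> in M. \<exists>s. t \<le> timescale s \<omega>"
  shows "\<bar>(\<integral>\<omega>. no_merger_prob n t \<omega> \<partial>M) - exp (- (npairs n * t))\<bar>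
    \<le> error_bound N n t \<eta> (\<bar>b\<bar> * (t + 1)) + prob {\<omega> \<in> space M. K < tauN N \<nu> t \<omega>}"
proof -
  let ?L = "exp (- (npairs n * t))" and ?B = "{\<omega> \<in> space M. K < tauN N \<nu> t \<omega>}"
  define \<sigma> where "\<sigma> \<omega> = (\<Sum>r\<in>{1..K}. indicator (before_tau t r) \<omega> * rate 3 r \<omega>)" for \<omega>
  have \<sigma>: "integrable M \<sigma>"
    unfolding \<sigma>_def[abs_def]
    by (intro Bochner_Integration.integrable_sum integrable_indicator_rate
        sets_filt_subset[OF before_tau_in_filt]) auto
  have integrable: "integrable M (no_merger_prob n t)"
    using no_merger_prob_measurable no_merger_prob_bounds
    by (intro integrable_const_bound[where B = 1] AE_I2) auto
  have "\<bar>(\<integral>\<omega>. no_merger_prob n t \<omega> \<partial>M) - ?L\<bar> \<le> (\<integral>\<omega>. \<bar>no_merger_prob n t \<omega> - ?L\<bar> \<partial>M)"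
    using integral_norm_bound[of M "\<lambda>\<omega>. no_merger_prob n t \<omega> - ?L"] integrable by (simp add: prob_space)
  also have "\<dots> \<le> (\<integral>\<omega>. error_bound N n t \<eta> (\<sigma> \<omega>) + indicator ?B \<omega> \<partial>M)"
    using no_merger_prob_error_le_truncated[OF t \<eta> reached, of K] integrable \<sigma> tauN_gt_in_sets
    unfolding \<sigma>_def error_bound_def
    by (intro integral_mono_AE) (auto simp: less_top[symmetric])
  also have "\<dots> = error_bound N n t \<eta> (\<integral>\<omega>. \<sigma> \<omega> \<partial>M) + prob ?B"
    using \<sigma> tauN_gt_in_sets by (simp add: error_bound_def prob_space less_top[symmetric])
  also have "\<dots> \<le> error_bound N n t \<eta> (\<bar>b\<bar> * (t + 1)) + prob ?B"
    using expected_stopped_rate_3_sum_le[OF moment _ N_ge_3, of t K] t \<eta>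
    unfolding \<sigma>_def by (intro add_right_mono error_bound_mono n_less) auto
  finally show ?thesis .
qed

lemma prob_tauN_gt_tendsto: "(\<lambda>K. prob {\<omega> \<in> space M. K < tauN N \<nu> t \<omega>}) \<longlonglongrightarrow> 0"
proof -
  have "(\<lambda>K. prob {\<omega> \<in> space M. K < tauN N \<nu> t \<omega>}) \<longlonglongrightarrow> prob (\<Inter>K. {\<omega> \<in> space M. K < tauN N \<nu> t \<omega>})"
    using tauN_gt_in_sets by (intro finite_Lim_measure_decseq) (auto simp: monotone_on_def)
  moreover have "(\<Inter>K. {\<omega> \<in> space M. K < tauN N \<nu> t \<omega>}) = {}"
    by auto
  ultimately show ?thesis
    by simp
qed

lemma integral_no_merger_prob_error_le:
  assumes "AE \<omega> in M. \<forall>s\<ge>1. cond_rate 3 s \<omega> \<le> b * cond_rate 2 s \<omega>"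
    and "0 < t" "0 < \<eta>" "AE \<omega> in M. \<exists>s. t \<le> timescale s \<omega>"
  shows "\<bar>(\<integral>\<omega>. no_merger_prob n t \<omega> \<partial>M) - exp (- (npairs n * t))\<bar> \<le> error_bound N n t \<eta> (\<bar>b\<bar> * (t + 1))"
proof (rule LIMSEQ_le_const)
  show "(\<lambda>K. error_bound N n t \<eta> (\<bar>b\<bar> * (t + 1)) + prob {\<omega> \<in> space M. K < tauN N \<nu> t \<omega>})
      \<longlonglongrightarrow> error_bound N n t \<eta> (\<bar>b\<bar> * (t + 1))"
    using tendsto_add[OF tendsto_const prob_tauN_gt_tendsto] by simp
  show "\<exists>K0. \<forall>K\<ge>K0. \<bar>(\<integral>\<omega>. no_merger_prob n t \<omega> \<partial>M) - exp (- (npairs n * t))\<bar>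
      \<le> error_bound N n t \<eta> (\<bar>b\<bar> * (t + 1)) + prob {\<omega> \<in> space M. K < tauN N \<nu> t \<omega>}"
    using integral_no_merger_prob_error_le_truncated[OF assms] by blast
qed

end

end

section \<open>Passage to the limit\<close>

lemma ffac_slack_tendsto: "(\<lambda>N. ffac_slack N n) \<longlonglongrightarrow> 1"
proof -
  have "(\<lambda>N. inverse (1 - real n * inverse (real N))) \<longlonglongrightarrow> inverse (1 - real n * 0)"
    by (intro tendsto_intros tendsto_inverse_0_at_top filterlim_real_sequentially) simp
  moreover have "\<forall>\<^sub>F N in sequentially. inverse (1 - real n * inverse (real N)) = real N / (real N - real n)"
    by (rule eventually_sequentiallyI[of "Suc n"]) (simp add: field_simps)
  ultimately have "(\<lambda>N. real N / (real N - real n)) \<longlonglongrightarrow> 1"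
    by (simp add: Lim_transform_eventually)
  then have "(\<lambda>N. (real N / (real N - real n)) ^ n) \<longlonglongrightarrow> 1 ^ n"
    by (rule tendsto_power)
  then show ?thesis
    unfolding ffac_slack_def by simp
qed

lemma inverse_real_minus_1_tendsto: "(\<lambda>N. inverse (real N - 1)) \<longlonglongrightarrow> 0"
proof -
  have "filterlim (\<lambda>N. - 1 + real N) at_top sequentially"
    by (rule filterlim_tendsto_add_at_top[OF tendsto_const filterlim_real_sequentially])
  then show ?thesis
    using tendsto_inverse_0_at_top by fastforce
qed

lemma pair_error_tendsto: "(\<lambda>N. pair_error N n) \<longlonglongrightarrow> 0"
proof -
  have "(\<lambda>N. npairs n * (ffac_slack N n - 1) + npairs n * inverse (real N)
      + 2 * npairs n * real n ^ 2 * ffac_slack N n * inverse (real N)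
      + ((npairs n)\<^sup>2 * ffac_slack N n + (npairs n)\<^sup>2) * inverse (real N - 1))
    \<longlonglongrightarrow> npairs n * (1 - 1) + npairs n * 0 + 2 * npairs n * real n ^ 2 * 1 * 0
      + ((npairs n)\<^sup>2 * 1 + (npairs n)\<^sup>2) * 0"
    by (intro tendsto_intros ffac_slack_tendsto inverse_real_minus_1_tendsto
        tendsto_inverse_0_at_top filterlim_real_sequentially)
  then show ?thesis
    by (simp add: pair_error_def divide_inverse)
qed

lemma triple_error_tendsto:
  "(\<lambda>N. triple_error N n) \<longlonglongrightarrow> 2 * (npairs n)\<^sup>2 + npairs n * real n ^ 2"
proof -
  have "(\<lambda>N. triple_error N n) \<longlonglongrightarrow> (npairs n)\<^sup>2 * 1 + npairs n * real n ^ 2 * 1 + (npairs n)\<^sup>2"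
    unfolding triple_error_def by (intro tendsto_intros ffac_slack_tendsto)
  then show ?thesis
    by simp
qed

lemma tendsto_of_error_bounds:
  fixes f :: "nat \<Rightarrow> real" and g :: "real \<Rightarrow> nat \<Rightarrow> real"
  assumes bound: "\<And>\<eta>. 0 < \<eta> \<Longrightarrow> \<forall>\<^sub>F N in sequentially. \<bar>f N - L\<bar> \<le> g \<eta> N"
    and lim: "\<And>\<eta>. 0 < \<eta> \<Longrightarrow> g \<eta> \<longlonglongrightarrow> C * \<eta>"
  shows "f \<longlonglongrightarrow> L"
proof (rule tendstoI)
  fix \<epsilon> :: real assume \<epsilon>: "0 < \<epsilon>"
  define \<eta> where "\<eta> = \<epsilon> / (2 * (\<bar>C\<bar> + 1))"
  have \<eta>: "0 < \<eta>"
    unfolding \<eta>_def using \<epsilon> by simp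
  have "C * \<eta> \<le> (\<bar>C\<bar> + 1) * \<eta>"
    using \<eta> by (intro mult_right_mono) auto
  also have "\<dots> < \<epsilon>"
    unfolding \<eta>_def using \<epsilon> by (simp add: field_simps add_pos_nonneg)
  finally have "\<forall>\<^sub>F N in sequentially. g \<eta> N < \<epsilon>"
    using order_tendstoD(2)[OF lim[OF \<eta>]] by blast
  with bound[OF \<eta>] show "\<forall>\<^sub>F N in sequentially. dist (f N) L < \<epsilon>"
    by eventually_elim (simp add: dist_real_def)
qed

lemma error_bound_tendsto:
  assumes "b \<longlonglongrightarrow> 0" "0 < \<eta>"
  shows "(\<lambda>N. error_bound N n t \<eta> (\<bar>b N\<bar> * (t + 1))) \<longlonglongrightarrow> npairs n * \<eta>"
proof -
  have "(\<lambda>N. error_bound N n t \<eta> (\<bar>b N\<bar> * (t + 1))) \<longlonglongrightarrow> 0 * (t + 1) + npairs n * \<eta>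
      + npairs n * (0 * inverse \<eta>) + (2 * (npairs n)\<^sup>2 + npairs n * real n ^ 2 + npairs n * inverse \<eta>) * (\<bar>0\<bar> * (t + 1))"
    unfolding error_bound_def
    by (intro tendsto_intros pair_error_tendsto triple_error_tendsto inverse_real_minus_1_tendsto assms(1))
  then show ?thesis
    by simp
qed

theorem lemma7:
  fixes n :: nat
    and M :: "nat \<Rightarrow> 'a measure"
    and \<nu> :: "nat \<Rightarrow> nat \<Rightarrow> nat \<Rightarrow> 'a \<Rightarrow> nat"
    and b :: "nat \<Rightarrow> real"
    and t :: real
  assumes prob: "\<And>N. N \<ge> n \<Longrightarrow> prob_space (M N)"
    and meas: "\<And>N s i. N \<ge> n \<Longrightarrow> 1 \<le> s \<Longrightarrow> i < N \<Longrightarrow>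
                 \<nu> N s i \<in> measurable (M N) (count_space UNIV)"
    and total: "\<And>N s \<omega>. N \<ge> n \<Longrightarrow> 1 \<le> s \<Longrightarrow> \<omega> \<in> space (M N) \<Longrightarrow>
                 (\<Sum>i<N. \<nu> N s i \<omega>) = N"
    and tau_fin: "\<forall>\<^sub>F N in sequentially. \<forall>u\<ge>0. AE \<omega> in M N.
                 \<exists>s. (\<Sum>r\<in>{1..s}. cN N (\<nu> N) r \<omega>) \<ge> u"
    and b_lim: "b \<longlonglongrightarrow> 0"
    and moment: "\<forall>\<^sub>F N in sequentially. AE \<omega> in M N. \<forall>s\<ge>1.
         (\<Sum>i<N. real_cond_exp (M N) (filt (M N) N (\<nu> N) (s - 1))
                    (\<lambda>x. ffac 3 (real (\<nu> N s i x))) \<omega>) / ffac 3 (real N)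
         \<le> b N * ((\<Sum>i<N. real_cond_exp (M N) (filt (M N) N (\<nu> N) (s - 1))
                    (\<lambda>x. ffac 2 (real (\<nu> N s i x))) \<omega>) / ffac 2 (real N))"
    and t_pos: "0 < t"
  shows "(\<lambda>N. integral\<^sup>L (M N)
            (\<lambda>\<omega>. \<Prod>r\<in>{1..tauN N (\<nu> N) t \<omega>}. (1 - pr n N (\<nu> N) r \<omega>)))
         \<longlonglongrightarrow> exp (- (real n * (real n - 1) / 2) * t)"
proof -
  define I where "I N = integral\<^sup>L (M N)
      (\<lambda>\<omega>. \<Prod>r\<in>{1..tauN N (\<nu> N) t \<omega>}. (1 - pr n N (\<nu> N) r \<omega>))" for N
  have process: "offspring_process (M N) N (\<nu> N)" if "n \<le> N" for N
    using that prob meas total by (intro offspring_process.intro offspring_process_axioms.intro) auto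
  have "\<forall>\<^sub>F N in sequentially. \<bar>I N - exp (- (npairs n * t))\<bar> \<le> error_bound N n t \<eta> (\<bar>b N\<bar> * (t + 1))"
    if \<eta>: "0 < \<eta>" for \<eta>
    using tau_fin moment eventually_ge_at_top[of "n + 3"]
  proof eventually_elim
    case (elim N)
    interpret offspring_process "M N" N "\<nu> N"
      using elim(3) by (intro process) simp
    have "AE \<omega> in M N. \<forall>s\<ge>1. cond_rate 3 s \<omega> \<le> b N * cond_rate 2 s \<omega>"
      using elim(2) by (simp add: cond_rate_def)
    moreover have "AE \<omega> in M N. \<exists>s. t \<le> timescale s \<omega>"
      using elim(1) t_pos by (simp add: timescale_def cN_eq_rate)
    ultimately show ?case
      using integral_no_merger_prob_error_le[of n "b N" t \<eta>] elim(3) t_pos \<eta>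
      by (simp add: I_def no_merger_prob_def)
  qed
  then have "I \<longlonglongrightarrow> exp (- (npairs n * t))"
    using error_bound_tendsto[OF b_lim] by (rule tendsto_of_error_bounds)
  then show ?thesis
    unfolding I_def npairs_def by simp
qed

end
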